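(* Assume the Hamiltonian is thermodynamically stable. Let $u=\mathcal{U}(\beta)/|\Lambda|$ and $V(u)=\mathrm{Av}(u^2)-\mathrm{Av}(u)^2$. Then for every $0<\beta_1<\beta_2$, in the thermodynamic limit $|\Lambda|\to\infty$, $$\int_{\beta_1}^{\beta_2}V(u)\,d\beta\to0.$$
   Context: For each finite $d$-dimensional parallelepiped $\Lambda\subset\mathbb{Z}^d$ let $\Sigma_\Lambda=\{-1,1\}^\Lambda$, and for $X\subset\Lambda$ let $\sigma_X=\prod_{i\in X}\sigma_i$ (with $\sigma_\emptyset=0$). Let $\{J_X\}$ be independent centered Gaussian random variables with variances $\mathrm{Av}(J_X^2)=\Delta_X^2$, translation invariant, where $\mathrm{Av}$ denotes expectation over the $J$'s. The Hamiltonian is $H_\Lambda(\sigma)=-\sum_{X\subset\Lambda}J_X\sigma_X$, $\mathcal{Z}(\beta)=\sum_{\sigma\in\Sigma_\Lambda}e^{-\beta H_\Lambda(\sigma)}$, and the random internal energy is $\mathcal{U}(\beta)=\sum_\sigma H_\Lambda(\sigma)e^{-\beta H_\Lambda(\sigma)}/\mathcal{Z}(\beta)$. The Hamiltonian is thermodynamically stable if there is $\bar c<\infty$ with $\sup_{\Lambda}\frac{1}{|\Lambda|}\sum_{X\subset\Lambda}\Delta_X^2\le\bar c$. The thermodynamic limit is the limit along boxes $\Lambda$ with $|\Lambda|\to\infty$. *)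

theory Defs
  imports "HOL-Probability.Probability"
begin

definition lattice_box :: "int ^ 'd \<Rightarrow> int ^ 'd \<Rightarrow> (int ^ 'd) set" where
  "lattice_box a b = {x. \<forall>i. a $ i \<le> x $ i \<and> x $ i \<le> b $ i}"

definition is_box :: "(int ^ 'd) set \<Rightarrow> bool" where
  "is_box L \<longleftrightarrow> (\<exists>a b. L = lattice_box a b)"

definition configs :: "'i set \<Rightarrow> ('i \<Rightarrow> real) set" where
  "configs L = PiE L (\<lambda>_. {-1, 1})"

text \<open>sigma_X = product of spins in X, with the paper's convention sigma_emptyset = 0.\<close>
definition sigmaX :: "('i \<Rightarrow> real) \<Rightarrow> 'i set \<Rightarrow> real" where
  "sigmaX \<sigma> X = (if X = {} then 0 else (\<Prod>i\<in>X. \<sigma> i))"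

definition Ham :: "'i set \<Rightarrow> ('i set \<Rightarrow> real) \<Rightarrow> ('i \<Rightarrow> real) \<Rightarrow> real" where
  "Ham L J \<sigma> = - (\<Sum>X\<in>Pow L. J X * sigmaX \<sigma> X)"

definition partition_fn :: "'i set \<Rightarrow> ('i set \<Rightarrow> real) \<Rightarrow> real \<Rightarrow> real" where
  "partition_fn L J \<beta> = (\<Sum>\<sigma>\<in>configs L. exp (- \<beta> * Ham L J \<sigma>))"

definition internal_energy :: "'i set \<Rightarrow> ('i set \<Rightarrow> real) \<Rightarrow> real \<Rightarrow> real" where
  "internal_energy L J \<beta> =
     (\<Sum>\<sigma>\<in>configs L. Ham L J \<sigma> * exp (- \<beta> * Ham L J \<sigma>)) / partition_fn L J \<beta>"

definition thermo_stable :: "((int ^ 'd) set \<Rightarrow> real) \<Rightarrow> bool" where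
  "thermo_stable \<Delta> \<longleftrightarrow>
     (\<exists>c. \<forall>L. is_box L \<longrightarrow> (\<Sum>X\<in>Pow L. (\<Delta> X)\<^sup>2) / real (card L) \<le> c)"

definition energy_variance ::
  "'a measure \<Rightarrow> ('i set \<Rightarrow> 'a \<Rightarrow> real) \<Rightarrow> 'i set \<Rightarrow> real \<Rightarrow> real" where
  "energy_variance M J L \<beta> =
     (let u = (\<lambda>\<omega>. internal_energy L (\<lambda>X. J X \<omega>) \<beta> / real (card L))
      in (\<integral>\<omega>. (u \<omega>)\<^sup>2 \<partial>M) - (\<integral>\<omega>. u \<omega> \<partial>M)\<^sup>2)"

end

theory Submission
  imports Defs
begin

text \<open>
  The pressure \<open>P(\<beta>) = ln Z(\<beta>) / |\<Lambda>|\<close> is a convex function of \<open>\<beta>\<close> whose slope is \<open>-u\<close>.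
  As a function of the independent Gaussian couplings it is \<open>\<beta> / |\<Lambda>|\<close>-Lipschitz in each of them, so
  an Efron--Stein argument gives \<open>Var P(\<beta>) \<le> \<beta>\<^sup>2 \<Sum>\<^sub>X \<Delta>\<^sub>X\<^sup>2 / |\<Lambda>|\<^sup>2\<close>, which is \<open>O(1/|\<Lambda>|)\<close> by
  thermodynamic stability; Jensen's inequality and the Gaussian moment generating function bound
  \<open>E P(\<beta>)\<close> uniformly. On a grid of mesh \<open>h\<close> the slope of a convex function is squeezed between
  neighbouring difference quotients of \<open>P\<close>, and integrating over \<open>[\<beta>\<^sub>1, \<beta>\<^sub>2]\<close> yields
  \<open>\<integral> Var u \<le> O(1/(h\<^sup>2 |\<Lambda>|)) + O(h)\<close>: let \<open>|\<Lambda>| \<rightarrow> \<infinity>\<close> first and then \<open>h \<rightarrow> 0\<close>.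
\<close>

section \<open>Square-integrable random variables\<close>

lemma square_add_le: "(a + b)\<^sup>2 \<le> 2 * a\<^sup>2 + 2 * (b::real)\<^sup>2"
  by (smt (verit) power2_sum sum_squares_bound)

lemma square_integrable_add:
  fixes X Y :: "'a \<Rightarrow> real"
  assumes [measurable]: "X \<in> borel_measurable M" "Y \<in> borel_measurable M"
    and "integrable M (\<lambda>x. (X x)\<^sup>2)" "integrable M (\<lambda>x. (Y x)\<^sup>2)"
  shows "integrable M (\<lambda>x. (X x + Y x)\<^sup>2)"
proof (rule Bochner_Integration.integrable_bound)
  show "integrable M (\<lambda>x. 2 * (X x)\<^sup>2 + 2 * (Y x)\<^sup>2)"
    using assms by auto
  show "AE x in M. norm ((X x + Y x)\<^sup>2) \<le> norm (2 * (X x)\<^sup>2 + 2 * (Y x)\<^sup>2)"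
    using square_add_le by (intro AE_I2) simp
qed simp

lemma square_integrable_mult_left:
  fixes X :: "'a \<Rightarrow> real"
  assumes "integrable M (\<lambda>x. (X x)\<^sup>2)"
  shows "integrable M (\<lambda>x. (c * X x)\<^sup>2)"
  using integrable_mult_right[OF assms, of "c\<^sup>2"] by (simp add: power_mult_distrib)

lemma square_integrable_diff:
  fixes X Y :: "'a \<Rightarrow> real"
  assumes "X \<in> borel_measurable M" "Y \<in> borel_measurable M"
    and "integrable M (\<lambda>x. (X x)\<^sup>2)" "integrable M (\<lambda>x. (Y x)\<^sup>2)"
  shows "integrable M (\<lambda>x. (X x - Y x)\<^sup>2)"
  using square_integrable_add[of X M "\<lambda>x. - Y x"] assms by simp

lemma square_integrable_sum:
  fixes X :: "'i \<Rightarrow> 'a \<Rightarrow> real"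
  assumes "finite I" "\<And>i. i \<in> I \<Longrightarrow> X i \<in> borel_measurable M"
    and "\<And>i. i \<in> I \<Longrightarrow> integrable M (\<lambda>x. (X i x)\<^sup>2)"
  shows "integrable M (\<lambda>x. (\<Sum>i\<in>I. X i x)\<^sup>2)"
  using assms by (induction I rule: finite_induct) (auto intro!: square_integrable_add)

lemma integrable_mult_of_square_integrable:
  fixes X Y :: "'a \<Rightarrow> real"
  assumes "X \<in> borel_measurable M" "Y \<in> borel_measurable M"
    and "integrable M (\<lambda>x. (X x)\<^sup>2)" "integrable M (\<lambda>x. (Y x)\<^sup>2)"
  shows "integrable M (\<lambda>x. X x * Y x)"
proof -
  have "integrable M (\<lambda>x. ((X x + Y x)\<^sup>2 - (X x)\<^sup>2 - (Y x)\<^sup>2) / 2)"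
    using square_integrable_add[OF assms] assms by auto
  then show ?thesis
    by (simp add: power2_eq_square algebra_simps)
qed

context prob_space
begin

lemma integral_square_diff_const:
  fixes X :: "'a \<Rightarrow> real"
  assumes [measurable]: "X \<in> borel_measurable M" and sq: "integrable M (\<lambda>x. (X x)\<^sup>2)"
  shows "(\<integral>x. (X x - c)\<^sup>2 \<partial>M) = variance X + (expectation X - c)\<^sup>2"
proof -
  have [simp]: "integrable M X"
    using square_integrable_imp_integrable[OF _ sq] by simp
  have "(\<integral>x. (X x - c)\<^sup>2 \<partial>M) = expectation (\<lambda>x. (X x)\<^sup>2) - 2 * c * expectation X + c\<^sup>2"
    using sq by (simp add: power2_diff prob_space)
  moreover have "variance X = expectation (\<lambda>x. (X x)\<^sup>2) - (expectation X)\<^sup>2"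
    using sq by (simp add: variance_eq)
  ultimately show ?thesis
    by (simp add: power2_diff)
qed

lemma variance_le_integral_square_diff:
  fixes X :: "'a \<Rightarrow> real"
  assumes "X \<in> borel_measurable M" and "integrable M (\<lambda>x. (X x)\<^sup>2)"
  shows "variance X \<le> (\<integral>x. (X x - c)\<^sup>2 \<partial>M)"
  using integral_square_diff_const[OF assms, of c] by simp

lemma square_integrable_diff_const:
  fixes X :: "'a \<Rightarrow> real"
  assumes "X \<in> borel_measurable M" and "integrable M (\<lambda>x. (X x)\<^sup>2)"
  shows "integrable M (\<lambda>x. (X x - c)\<^sup>2)"
  using square_integrable_diff[of X M "\<lambda>_. c"] assms by simp

lemma variance_diff_le:
  fixes X Y :: "'a \<Rightarrow> real"
  assumes [measurable]: "X \<in> borel_measurable M" "Y \<in> borel_measurable M"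
    and sx: "integrable M (\<lambda>x. (X x)\<^sup>2)" and sy: "integrable M (\<lambda>x. (Y x)\<^sup>2)"
  shows "variance (\<lambda>x. X x - Y x) \<le> 2 * variance X + 2 * variance Y"
proof -
  let ?a = "expectation X" and ?b = "expectation Y"
  have "integrable M X" "integrable M Y"
    using square_integrable_imp_integrable[OF _ sx] square_integrable_imp_integrable[OF _ sy]
    by simp_all
  then have "expectation (\<lambda>x. X x - Y x) = ?a - ?b"
    by simp
  then have "variance (\<lambda>x. X x - Y x) = (\<integral>x. ((X x - ?a) - (Y x - ?b))\<^sup>2 \<partial>M)"
    by (simp only:) (simp add: algebra_simps)
  also have "\<dots> \<le> (\<integral>x. 2 * (X x - ?a)\<^sup>2 + 2 * (Y x - ?b)\<^sup>2 \<partial>M)"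
  proof (rule integral_mono)
    have vx: "integrable M (\<lambda>x. (X x - ?a)\<^sup>2)" and vy: "integrable M (\<lambda>x. (Y x - ?b)\<^sup>2)"
      using sx sy by (simp_all add: square_integrable_diff_const)
    then show "integrable M (\<lambda>x. ((X x - ?a) - (Y x - ?b))\<^sup>2)"
      using square_integrable_diff[of "\<lambda>x. X x - ?a" M "\<lambda>x. Y x - ?b"] by simp
    show "integrable M (\<lambda>x. 2 * (X x - ?a)\<^sup>2 + 2 * (Y x - ?b)\<^sup>2)"
      using vx vy by simp
    show "((X x - ?a) - (Y x - ?b))\<^sup>2 \<le> 2 * (X x - ?a)\<^sup>2 + 2 * (Y x - ?b)\<^sup>2" for x
      using square_add_le[of "X x - ?a" "- (Y x - ?b)"] by (simp only: power2_minus diff_conv_add_uminus)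
  qed
  also have "\<dots> = 2 * variance X + 2 * variance Y"
    using square_integrable_diff_const sx sy by simp
  finally show ?thesis .
qed

lemma variance_divide:
  fixes X :: "'a \<Rightarrow> real"
  assumes "integrable M X"
  shows "variance (\<lambda>x. X x / h) = variance X / h\<^sup>2"
  using assms by (simp add: diff_divide_distrib[symmetric] power_divide)

end

section \<open>An Efron--Stein inequality for coordinatewise Lipschitz functions\<close>

lemma square_integrable_lipschitz:
  fixes \<mu> :: "real measure" and \<phi> :: "real \<Rightarrow> real"
  assumes "prob_space \<mu>" and "integrable \<mu> (\<lambda>t. t\<^sup>2)"
    and [measurable]: "\<phi> \<in> borel_measurable \<mu>"
    and lip: "\<And>s t. \<bar>\<phi> s - \<phi> t\<bar> \<le> K * \<bar>s - t\<bar>"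
  shows "integrable \<mu> (\<lambda>t. (\<phi> t)\<^sup>2)"
proof (rule Bochner_Integration.integrable_bound)
  interpret prob_space \<mu> by fact
  show "integrable \<mu> (\<lambda>t. 2 * (\<phi> 0)\<^sup>2 + 2 * (K * t)\<^sup>2)"
    using square_integrable_mult_left[OF assms(2)] by simp
  show "AE t in \<mu>. norm ((\<phi> t)\<^sup>2) \<le> norm (2 * (\<phi> 0)\<^sup>2 + 2 * (K * t)\<^sup>2)"
  proof (rule AE_I2)
    fix t
    have "\<bar>\<phi> t\<bar> \<le> \<bar>\<phi> 0\<bar> + \<bar>K * t\<bar>"
      using lip[of t 0] abs_ge_self[of K] abs_ge_zero[of t]
      by (simp add: abs_mult) (smt (verit) mult_right_mono)
    then have "(\<phi> t)\<^sup>2 \<le> (\<bar>\<phi> 0\<bar> + \<bar>K * t\<bar>)\<^sup>2"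
      by (metis abs_ge_zero abs_le_square_iff abs_of_nonneg add_nonneg_nonneg)
    also have "\<dots> \<le> 2 * (\<phi> 0)\<^sup>2 + 2 * (K * t)\<^sup>2"
      using square_add_le[of "\<bar>\<phi> 0\<bar>" "\<bar>K * t\<bar>"] by simp
    finally show "norm ((\<phi> t)\<^sup>2) \<le> norm (2 * (\<phi> 0)\<^sup>2 + 2 * (K * t)\<^sup>2)"
      by simp
  qed
qed simp

lemma variance_lipschitz_le:
  fixes \<mu> :: "real measure" and \<phi> :: "real \<Rightarrow> real"
  assumes "prob_space \<mu>" and "sets \<mu> = sets borel" and "integrable \<mu> (\<lambda>t. t\<^sup>2)"
    and [measurable]: "\<phi> \<in> borel_measurable \<mu>"
    and lip: "\<And>s t. \<bar>\<phi> s - \<phi> t\<bar> \<le> K * \<bar>s - t\<bar>"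
  shows "prob_space.variance \<mu> \<phi> \<le> K\<^sup>2 * prob_space.variance \<mu> (\<lambda>t. t)"
proof -
  interpret prob_space \<mu> by fact
  have [measurable]: "(\<lambda>t::real. t) \<in> borel_measurable \<mu>"
    by (subst measurable_cong_sets[OF assms(2) refl]) simp
  let ?m = "expectation (\<lambda>t. t)"
  have "variance \<phi> \<le> (\<integral>t. (\<phi> t - \<phi> ?m)\<^sup>2 \<partial>\<mu>)"
    using square_integrable_lipschitz[OF assms(1,3,4) lip]
    by (intro variance_le_integral_square_diff) simp_all
  also have "\<dots> \<le> (\<integral>t. K\<^sup>2 * (t - ?m)\<^sup>2 \<partial>\<mu>)"
  proof (rule integral_mono)
    show "integrable \<mu> (\<lambda>t. (\<phi> t - \<phi> ?m)\<^sup>2)"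
      using square_integrable_lipschitz[OF assms(1,3,4) lip]
      by (intro square_integrable_diff_const) simp_all
    show "integrable \<mu> (\<lambda>t. K\<^sup>2 * (t - ?m)\<^sup>2)"
      using square_integrable_diff_const[of "\<lambda>t. t"] assms(3) by simp
    fix t
    have "\<bar>\<phi> t - \<phi> ?m\<bar>\<^sup>2 \<le> (K * \<bar>t - ?m\<bar>)\<^sup>2"
      using lip by (rule power_mono) simp
    then show "(\<phi> t - \<phi> ?m)\<^sup>2 \<le> K\<^sup>2 * (t - ?m)\<^sup>2"
      by (simp add: power_mult_distrib)
  qed
  also have "\<dots> = K\<^sup>2 * variance (\<lambda>t. t)"
    by simp
  finally show ?thesis .
qed

definition coordinatewise_lipschitz ::
  "'i set \<Rightarrow> ('i \<Rightarrow> real) \<Rightarrow> (('i \<Rightarrow> real) \<Rightarrow> real) \<Rightarrow> bool" where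
  "coordinatewise_lipschitz I K f \<longleftrightarrow>
     (\<forall>x \<in> I \<rightarrow>\<^sub>E UNIV. \<forall>i \<in> I. \<forall>t. \<bar>f (x(i := t)) - f x\<bar> \<le> K i * \<bar>t - x i\<bar>)"

lemma coordinatewise_lipschitz_fibre:
  assumes "coordinatewise_lipschitz (insert i I) K f" and "x \<in> I \<rightarrow>\<^sub>E UNIV"
  shows "\<bar>f (x(i := t)) - f (x(i := s))\<bar> \<le> K i * \<bar>t - s\<bar>"
proof -
  have "x(i := s) \<in> insert i I \<rightarrow>\<^sub>E UNIV"
    using assms(2) by (auto simp: PiE_def extensional_def)
  then show ?thesis
    using assms(1) unfolding coordinatewise_lipschitz_def by fastforce
qed

locale real_product_prob_space =
  fixes \<mu> :: "'i \<Rightarrow> real measure"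
  assumes prob_space_factor: "\<And>i. prob_space (\<mu> i)"
    and sets_factor: "\<And>i. sets (\<mu> i) = sets borel"
    and second_moment_factor: "\<And>i. integrable (\<mu> i) (\<lambda>t. t\<^sup>2)"
begin

sublocale product_sigma_finite \<mu>
  by (simp add: product_sigma_finite_def prob_space_imp_sigma_finite prob_space_factor)

lemma space_PiM_factors: "space (PiM I \<mu>) = I \<rightarrow>\<^sub>E UNIV"
  using sets_eq_imp_space_eq[OF sets_factor] by (simp add: space_PiM)

definition average_out :: "'i \<Rightarrow> (('i \<Rightarrow> real) \<Rightarrow> real) \<Rightarrow> ('i \<Rightarrow> real) \<Rightarrow> real" where
  "average_out i f x = (\<integral>t. f (x(i := t)) \<partial>\<mu> i)"

lemma measurable_fibre:
  assumes "i \<notin> I" and "f \<in> borel_measurable (PiM (insert i I) \<mu>)" and "x \<in> space (PiM I \<mu>)"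
  shows "(\<lambda>t. f (x(i := t))) \<in> borel_measurable (\<mu> i)"
  using measurable_comp[OF measurable_component_update[OF assms(3,1)] assms(2)]
  by (simp add: comp_def)

lemma square_integrable_fibre:
  assumes "i \<notin> I" and "f \<in> borel_measurable (PiM (insert i I) \<mu>)" and "x \<in> space (PiM I \<mu>)"
    and "coordinatewise_lipschitz (insert i I) K f"
  shows "integrable (\<mu> i) (\<lambda>t. (f (x(i := t)))\<^sup>2)"
proof (rule square_integrable_lipschitz[OF prob_space_factor second_moment_factor
      measurable_fibre[OF assms(1-3)]])
  show "\<bar>f (x(i := s)) - f (x(i := t))\<bar> \<le> K i * \<bar>s - t\<bar>" for s t
    using coordinatewise_lipschitz_fibre[OF assms(4)] assms(3) by (simp add: space_PiM_factors)
qed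

lemma integrable_fibre:
  assumes "i \<notin> I" and "f \<in> borel_measurable (PiM (insert i I) \<mu>)" and "x \<in> space (PiM I \<mu>)"
    and "coordinatewise_lipschitz (insert i I) K f"
  shows "integrable (\<mu> i) (\<lambda>t. f (x(i := t)))"
proof -
  interpret prob_space "\<mu> i" by (rule prob_space_factor)
  show ?thesis
    using square_integrable_imp_integrable[OF measurable_fibre[OF assms(1-3)]
        square_integrable_fibre[OF assms]] .
qed

lemma measurable_average_out:
  assumes "f \<in> borel_measurable (PiM (insert i I) \<mu>)" and "i \<notin> I"
  shows "average_out i f \<in> borel_measurable (PiM I \<mu>)"
proof -
  have "(\<lambda>(x, t). f (x(i := t))) \<in> borel_measurable (PiM I \<mu> \<Otimes>\<^sub>M \<mu> i)"
    using measurable_comp[OF measurable_add_dim assms(1)] by (simp add: comp_def case_prod_beta)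
  then show ?thesis
    unfolding average_out_def
    by (rule sigma_finite_measure.borel_measurable_lebesgue_integral[OF
          prob_space_imp_sigma_finite[OF prob_space_factor]])
qed

lemma coordinatewise_lipschitz_average_out:
  assumes "i \<notin> I" and "f \<in> borel_measurable (PiM (insert i I) \<mu>)"
    and lip: "coordinatewise_lipschitz (insert i I) K f"
  shows "coordinatewise_lipschitz I K (average_out i f)"
  unfolding coordinatewise_lipschitz_def
proof (intro ballI allI)
  fix x :: "'i \<Rightarrow> real" and j s
  assume x: "x \<in> I \<rightarrow>\<^sub>E UNIV" and j: "j \<in> I"
  interpret \<mu>i: prob_space "\<mu> i" by (rule prob_space_factor)
  have xj: "x(j := s) \<in> I \<rightarrow>\<^sub>E UNIV"
    using x j by (auto simp: PiE_def extensional_def)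
  have ij: "i \<noteq> j" using j assms(1) by auto
  note int = integrable_fibre[OF assms(1,2) _ lip, unfolded space_PiM_factors]
  have "average_out i f (x(j := s)) - average_out i f x
      = (\<integral>t. f (x(j := s, i := t)) - f (x(i := t)) \<partial>\<mu> i)"
    unfolding average_out_def using int[OF x] int[OF xj] by simp
  also have "\<bar>\<dots>\<bar> \<le> (\<integral>t. K j * \<bar>s - x j\<bar> \<partial>\<mu> i)"
  proof (rule integral_abs_bound_integral)
    show "integrable (\<mu> i) (\<lambda>t. f (x(j := s, i := t)) - f (x(i := t)))"
      using int[OF x] int[OF xj] by simp
    fix t
    have "x(i := t) \<in> insert i I \<rightarrow>\<^sub>E UNIV"
      using x by (auto simp: PiE_def extensional_def)
    then have "\<bar>f (x(i := t, j := s)) - f (x(i := t))\<bar> \<le> K j * \<bar>s - (x(i := t)) j\<bar>"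
      using lip j unfolding coordinatewise_lipschitz_def by blast
    then show "\<bar>f (x(j := s, i := t)) - f (x(i := t))\<bar> \<le> K j * \<bar>s - x j\<bar>"
      using ij by (simp add: fun_upd_twist)
  qed simp
  also have "\<dots> = K j * \<bar>s - x j\<bar>"
    by (simp add: \<mu>i.prob_space)
  finally show "\<bar>average_out i f (x(j := s)) - average_out i f x\<bar> \<le> K j * \<bar>s - x j\<bar>" .
qed

lemma nn_integral_square_average_out:
  assumes "finite I" and "i \<notin> I" and f: "f \<in> borel_measurable (PiM (insert i I) \<mu>)"
    and lip: "coordinatewise_lipschitz (insert i I) K f"
  shows "(\<integral>\<^sup>+x. ennreal ((f x - c)\<^sup>2) \<partial>PiM (insert i I) \<mu>)
    \<le> ennreal ((K i)\<^sup>2 * prob_space.variance (\<mu> i) (\<lambda>t. t))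
      + (\<integral>\<^sup>+x. ennreal ((average_out i f x - c)\<^sup>2) \<partial>PiM I \<mu>)"
proof -
  interpret \<mu>i: prob_space "\<mu> i" by (rule prob_space_factor)
  interpret PiI: prob_space "PiM I \<mu>" by (rule prob_space_PiM) (simp add: prob_space_factor)
  let ?V = "(K i)\<^sup>2 * \<mu>i.variance (\<lambda>t. t)"
  have fibre: "(\<integral>\<^sup>+t. ennreal ((f (x(i := t)) - c)\<^sup>2) \<partial>\<mu> i)
      \<le> ennreal ?V + ennreal ((average_out i f x - c)\<^sup>2)" if x: "x \<in> space (PiM I \<mu>)" for x
  proof -
    note fm = measurable_fibre[OF assms(2) f x] and sq = square_integrable_fibre[OF assms(2) f x lip]
    have "(\<integral>\<^sup>+t. ennreal ((f (x(i := t)) - c)\<^sup>2) \<partial>\<mu> i) = ennreal (\<integral>t. (f (x(i := t)) - c)\<^sup>2 \<partial>\<mu> i)"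
      using \<mu>i.square_integrable_diff_const[OF fm sq] by (intro nn_integral_eq_integral) auto
    also have "(\<integral>t. (f (x(i := t)) - c)\<^sup>2 \<partial>\<mu> i)
        = \<mu>i.variance (\<lambda>t. f (x(i := t))) + (average_out i f x - c)\<^sup>2"
      unfolding average_out_def by (rule \<mu>i.integral_square_diff_const[OF fm sq])
    also have "ennreal (\<mu>i.variance (\<lambda>t. f (x(i := t))) + (average_out i f x - c)\<^sup>2)
        \<le> ennreal (?V + (average_out i f x - c)\<^sup>2)"
      using coordinatewise_lipschitz_fibre[OF lip] x
      by (intro ennreal_leI add_right_mono
          variance_lipschitz_le[OF prob_space_factor sets_factor second_moment_factor fm])
        (simp add: space_PiM_factors)
    also have "\<dots> = ennreal ?V + ennreal ((average_out i f x - c)\<^sup>2)"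
      by (intro ennreal_plus) (simp_all add: \<mu>i.variance_positive)
    finally show ?thesis .
  qed
  have "(\<integral>\<^sup>+x. ennreal ((f x - c)\<^sup>2) \<partial>PiM (insert i I) \<mu>)
      = (\<integral>\<^sup>+x. (\<integral>\<^sup>+t. ennreal ((f (x(i := t)) - c)\<^sup>2) \<partial>\<mu> i) \<partial>PiM I \<mu>)"
    using assms(1,2) f by (intro product_nn_integral_insert) auto
  also have "\<dots> \<le> (\<integral>\<^sup>+x. ennreal ?V + ennreal ((average_out i f x - c)\<^sup>2) \<partial>PiM I \<mu>)"
    by (intro nn_integral_mono fibre)
  also have "\<dots> = ennreal ?V + (\<integral>\<^sup>+x. ennreal ((average_out i f x - c)\<^sup>2) \<partial>PiM I \<mu>)"
    using measurable_average_out[OF f assms(2)]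
    by (subst nn_integral_add) (auto simp: PiI.emeasure_space_1)
  finally show ?thesis .
qed

theorem efron_stein_lipschitz:
  assumes "finite I" and "f \<in> borel_measurable (PiM I \<mu>)" and "coordinatewise_lipschitz I K f"
  shows "\<exists>c. (\<integral>\<^sup>+x. ennreal ((f x - c)\<^sup>2) \<partial>PiM I \<mu>)
    \<le> ennreal (\<Sum>i\<in>I. (K i)\<^sup>2 * prob_space.variance (\<mu> i) (\<lambda>t. t))"
  using assms
proof (induction I arbitrary: f rule: finite_induct)
  case empty
  show ?case
    by (rule exI[of _ "f (\<lambda>_. undefined)"]) (simp add: PiM_empty nn_integral_count_space_finite)
next
  case (insert i I)
  obtain c where c: "(\<integral>\<^sup>+x. ennreal ((average_out i f x - c)\<^sup>2) \<partial>PiM I \<mu>)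
      \<le> ennreal (\<Sum>j\<in>I. (K j)\<^sup>2 * prob_space.variance (\<mu> j) (\<lambda>t. t))"
    using insert.IH[OF measurable_average_out coordinatewise_lipschitz_average_out] insert.hyps insert.prems
    by blast
  have nonneg: "0 \<le> (K j)\<^sup>2 * prob_space.variance (\<mu> j) (\<lambda>t. t)" for j
    by (simp add: prob_space.variance_positive[OF prob_space_factor])
  have "(\<integral>\<^sup>+x. ennreal ((f x - c)\<^sup>2) \<partial>PiM (insert i I) \<mu>)
      \<le> ennreal ((K i)\<^sup>2 * prob_space.variance (\<mu> i) (\<lambda>t. t))
        + ennreal (\<Sum>j\<in>I. (K j)\<^sup>2 * prob_space.variance (\<mu> j) (\<lambda>t. t))"
    using nn_integral_square_average_out[OF insert.hyps insert.prems] c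
    by (rule order_trans[OF _ add_left_mono])
  also have "\<dots> = ennreal (\<Sum>j\<in>insert i I. (K j)\<^sup>2 * prob_space.variance (\<mu> j) (\<lambda>t. t))"
    using insert.hyps nonneg by (simp add: ennreal_plus sum_nonneg)
  finally show ?case ..
qed

end

section \<open>Variance of the slope of a convex random function\<close>

lemma interval_integral_le_step_sum:
  fixes f :: "real \<Rightarrow> real" and c t :: "nat \<Rightarrow> real"
  assumes "b1 \<le> b2" and "finite S"
    and step: "\<And>x. b1 \<le> x \<Longrightarrow> x \<le> b2 \<Longrightarrow> 0 \<le> f x \<and> f x \<le> (\<Sum>j\<in>S. c j * indicator {t j..t (Suc j)} x)"
    and cells: "\<And>j. j \<in> S \<Longrightarrow> 0 \<le> c j \<and> t j \<le> t (Suc j)"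
  shows "0 \<le> (LBINT x=b1..b2. f x) \<and> (LBINT x=b1..b2. f x) \<le> (\<Sum>j\<in>S. c j * (t (Suc j) - t j))"
proof -
  define F where "F x = indicator {b1..b2} x * f x" for x
  define G where "G x = (\<Sum>j\<in>S. c j * indicator {t j..t (Suc j)} x)" for x :: real
  have "(LBINT x=b1..b2. f x) = integral\<^sup>L lborel F"
    unfolding interval_integral_Icc[OF assms(1)] set_lebesgue_integral_def F_def by simp
  moreover have F_nonneg: "0 \<le> F x" for x
    using step[of x] by (auto simp: F_def indicator_def)
  moreover have G_nonneg: "0 \<le> G x" for x
    unfolding G_def using cells by (intro sum_nonneg mult_nonneg_nonneg) (auto simp: indicator_def)
  moreover have "F x \<le> G x" for x
    using step[of x] G_nonneg[of x] by (auto simp: F_def G_def indicator_def)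
  moreover have "integrable lborel G"
    unfolding G_def using assms(2)
    by (intro Bochner_Integration.integrable_sum integrable_mult_right integrable_real_indicator)
      (auto dest: cells simp: emeasure_lborel_Icc)
  moreover have "integral\<^sup>L lborel G = (\<Sum>j\<in>S. c j * (t (Suc j) - t j))"
    unfolding G_def
    by (subst Bochner_Integration.integral_sum)
      (auto intro!: sum.cong integrable_real_indicator dest: cells
        simp: emeasure_lborel_Icc measure_lborel_Icc)
  ultimately show ?thesis
    using integral_nonneg_AE[of G lborel] integral_nonneg_AE[of F lborel] integral_mono[where M=lborel and f=F and g=G]
    by (cases "integrable lborel F") (auto simp: not_integrable_integral_eq)
qed

lemma sum_telescope_double_step:
  fixes g :: "nat \<Rightarrow> 'a::ab_group_add"
  assumes "1 \<le> n"
  shows "(\<Sum>j\<in>{1..n}. g (Suc j) - g (j - 1)) = g (Suc n) + g n - g 1 - g 0"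
  using assms by (induction n rule: dec_induct) (simp_all add: atLeastAtMostSuc_conv)

locale convex_random_function = prob_space M for M :: "'a measure" +
  fixes P a :: "real \<Rightarrow> 'a \<Rightarrow> real" and T V C :: real
  assumes measurable_P [measurable]: "\<And>\<beta>. P \<beta> \<in> borel_measurable M"
    and measurable_a [measurable]: "\<And>\<beta>. a \<beta> \<in> borel_measurable M"
    and square_integrable_P: "\<And>\<beta>. 0 \<le> \<beta> \<Longrightarrow> \<beta> \<le> T \<Longrightarrow> integrable M (\<lambda>\<omega>. (P \<beta> \<omega>)\<^sup>2)"
    and square_integrable_a: "\<And>\<beta>. 0 \<le> \<beta> \<Longrightarrow> \<beta> \<le> T \<Longrightarrow> integrable M (\<lambda>\<omega>. (a \<beta> \<omega>)\<^sup>2)"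
    and slope: "\<And>\<omega> x y. \<omega> \<in> space M \<Longrightarrow> 0 \<le> x \<Longrightarrow> x \<le> T \<Longrightarrow> 0 \<le> y \<Longrightarrow> y \<le> T \<Longrightarrow>
      a x \<omega> * (y - x) \<le> P y \<omega> - P x \<omega>"
    and variance_P: "\<And>\<beta>. 0 \<le> \<beta> \<Longrightarrow> \<beta> \<le> T \<Longrightarrow> variance (P \<beta>) \<le> V"
    and expectation_P: "\<And>\<beta>. 0 \<le> \<beta> \<Longrightarrow> \<beta> \<le> T \<Longrightarrow> expectation (P \<beta>) \<in> {0..C}"
begin

lemma slope_mono:
  assumes \<omega>: "\<omega> \<in> space M" and "0 \<le> x" "x \<le> y" "y \<le> T"
  shows "a x \<omega> \<le> a y \<omega>"
proof -
  have "a x \<omega> * (y - x) \<le> P y \<omega> - P x \<omega>" and "a y \<omega> * (x - y) \<le> P x \<omega> - P y \<omega>"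
    using assms by (auto intro!: slope)
  then have "a x \<omega> * (y - x) \<le> a y \<omega> * (y - x)"
    by (simp add: algebra_simps)
  then show ?thesis
    using assms by (cases "x = y") auto
qed

lemma integrable_P: "0 \<le> \<beta> \<Longrightarrow> \<beta> \<le> T \<Longrightarrow> integrable M (P \<beta>)"
  using square_integrable_imp_integrable[OF measurable_P square_integrable_P] by simp

lemma variance_bound_nonneg: "0 \<le> T \<Longrightarrow> 0 \<le> V"
  using variance_P[of 0] variance_positive[of "P 0"] by linarith

lemma expectation_bound_nonneg: "0 \<le> T \<Longrightarrow> 0 \<le> C"
  using expectation_P[of 0] by simp

end

text \<open>Grid of mesh \<open>h\<close> on \<open>[b1 - h, b2 + h]\<close> with nodes \<open>node 1 = b1\<close> and \<open>node (N + 1) = b2\<close>;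
  the slope on a cell is squeezed between the difference quotients of the two neighbouring cells.
  The room up to \<open>T \<ge> b2 + h + 1\<close> serves to bound the last quotient by a chord of length \<open>1\<close>.\<close>

locale convex_random_function_grid = convex_random_function +
  fixes b1 b2 h :: real and N :: nat
  assumes b1_pos: "0 < b1" and b1_less_b2: "b1 < b2" and N_pos: "1 \<le> N"
    and mesh: "h = (b2 - b1) / real N" and mesh_small: "h \<le> b1 / 2" and T_large: "b2 + h + 1 \<le> T"
begin

definition node :: "nat \<Rightarrow> real" where
  "node j = b1 - h + real j * h"

definition diff_quot :: "nat \<Rightarrow> 'a \<Rightarrow> real" where
  "diff_quot j \<omega> = (P (node (Suc j)) \<omega> - P (node j) \<omega>) / h"

definition spread :: "'a \<Rightarrow> real" where
  "spread \<omega> = diff_quot (Suc N) \<omega> - diff_quot 0 \<omega>"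

definition gap :: "nat \<Rightarrow> 'a \<Rightarrow> real" where
  "gap j \<omega> = diff_quot (Suc j) \<omega> - diff_quot (j - 1) \<omega>"

lemma mesh_pos: "0 < h"
  using b1_less_b2 N_pos by (simp add: mesh)

lemma N_mesh: "real N * h = b2 - b1"
  using N_pos by (simp add: mesh)

lemma T_nonneg: "0 \<le> T"
  using T_large b1_pos b1_less_b2 mesh_pos by linarith

lemma node_pos: "0 < node j"
  using mesh_small b1_pos mesh_pos by (simp add: node_def add_pos_nonneg)

lemma node_le_T: "j \<le> N + 2 \<Longrightarrow> node j \<le> T"
proof -
  assume "j \<le> N + 2"
  then have "real j * h \<le> real (N + 2) * h"
    using mesh_pos by (intro mult_right_mono) auto
  also have "\<dots> = b2 - b1 + 2 * h"
    using N_mesh by (simp add: algebra_simps)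
  finally show ?thesis
    using T_large unfolding node_def by linarith
qed

lemma node_Suc: "node (Suc j) - node j = h"
  by (simp add: node_def algebra_simps)

lemma node_mono: "i \<le> k \<Longrightarrow> node i \<le> node k"
  unfolding node_def using mesh_pos by (simp add: mult_right_mono)

lemma measurable_diff_quot [measurable]: "diff_quot j \<in> borel_measurable M"
  unfolding diff_quot_def[abs_def] by measurable

lemma measurable_spread [measurable]: "spread \<in> borel_measurable M"
  unfolding spread_def[abs_def] by measurable

lemma square_integrable_P_node: "j \<le> N + 2 \<Longrightarrow> integrable M (\<lambda>\<omega>. (P (node j) \<omega>)\<^sup>2)"
  using square_integrable_P[of "node j"] node_pos[of j] node_le_T[of j] by simp

lemma square_integrable_diff_quot: "j \<le> N + 1 \<Longrightarrow> integrable M (\<lambda>\<omega>. (diff_quot j \<omega>)\<^sup>2)"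
  unfolding diff_quot_def
  using square_integrable_mult_left[where X="\<lambda>\<omega>. P (node (Suc j)) \<omega> - P (node j) \<omega>" and c="1 / h"]
  by (simp add: square_integrable_diff square_integrable_P_node)

lemma integrable_diff_quot: "j \<le> N + 1 \<Longrightarrow> integrable M (diff_quot j)"
  using square_integrable_imp_integrable[OF measurable_diff_quot square_integrable_diff_quot] by simp

lemma square_integrable_spread: "integrable M (\<lambda>\<omega>. (spread \<omega>)\<^sup>2)"
  unfolding spread_def by (intro square_integrable_diff square_integrable_diff_quot) auto

lemma integrable_gap_spread: "j \<le> N \<Longrightarrow> integrable M (\<lambda>\<omega>. gap j \<omega> * spread \<omega>)"
  unfolding gap_def
  by (intro integrable_mult_of_square_integrable square_integrable_diff square_integrable_diff_quot
      square_integrable_spread) auto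

lemma variance_diff_quot: "j \<le> N + 1 \<Longrightarrow> variance (diff_quot j) \<le> 4 * V / h\<^sup>2"
proof -
  assume j: "j \<le> N + 1"
  have "variance (diff_quot j) = variance (\<lambda>\<omega>. P (node (Suc j)) \<omega> - P (node j) \<omega>) / h\<^sup>2"
    unfolding diff_quot_def using j
    by (intro variance_divide Bochner_Integration.integrable_diff integrable_P)
      (auto intro: less_imp_le node_pos node_le_T)
  also have "variance (\<lambda>\<omega>. P (node (Suc j)) \<omega> - P (node j) \<omega>)
      \<le> 2 * variance (P (node (Suc j))) + 2 * variance (P (node j))"
    using j by (intro variance_diff_le square_integrable_P_node) auto
  also have "\<dots> \<le> 2 * V + 2 * V"
    using j by (intro add_mono mult_left_mono variance_P) (auto intro: less_imp_le node_pos node_le_T)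
  finally show ?thesis
    using mesh_pos by (simp add: divide_right_mono)
qed

lemma diff_quot_between_slopes:
  assumes "\<omega> \<in> space M" and "j \<le> N + 1"
  shows "a (node j) \<omega> \<le> diff_quot j \<omega> \<and> diff_quot j \<omega> \<le> a (node (Suc j)) \<omega>"
proof -
  have "a (node j) \<omega> * (node (Suc j) - node j) \<le> P (node (Suc j)) \<omega> - P (node j) \<omega>"
    and "a (node (Suc j)) \<omega> * (node j - node (Suc j)) \<le> P (node j) \<omega> - P (node (Suc j)) \<omega>"
    using assms by (intro slope; auto intro: less_imp_le node_pos node_le_T)+
  moreover have "node (Suc j) = node j + h"
    by (simp add: node_def algebra_simps)
  ultimately show ?thesis
    using mesh_pos unfolding diff_quot_def by (simp add: field_simps)
qed

lemma diff_quot_mono: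
  assumes \<omega>: "\<omega> \<in> space M" and "i \<le> k" and "k \<le> N + 1"
  shows "diff_quot i \<omega> \<le> diff_quot k \<omega>"
proof (cases "i = k")
  case False
  then have "Suc i \<le> k"
    using assms by simp
  have "diff_quot i \<omega> \<le> a (node (Suc i)) \<omega>"
    using diff_quot_between_slopes[OF \<omega>, of i] assms by simp
  also have "\<dots> \<le> a (node k) \<omega>"
    using node_pos[of "Suc i"] node_mono[OF \<open>Suc i \<le> k\<close>] node_le_T[of k] assms
    by (intro slope_mono[OF \<omega>]) auto
  also have "\<dots> \<le> diff_quot k \<omega>"
    using diff_quot_between_slopes[OF \<omega>, of k] assms by simp
  finally show ?thesis .
qed simp

lemma spread_nonneg: "\<omega> \<in> space M \<Longrightarrow> 0 \<le> spread \<omega>"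
  unfolding spread_def using diff_quot_mono[of \<omega> 0 "Suc N"] by simp

lemma gap_nonneg: "\<omega> \<in> space M \<Longrightarrow> j \<le> N \<Longrightarrow> 0 \<le> gap j \<omega>"
  unfolding gap_def using diff_quot_mono[of \<omega> "j - 1" "Suc j"] by simp

lemma gap_le_spread:
  assumes "\<omega> \<in> space M" and "j \<le> N"
  shows "gap j \<omega> \<le> spread \<omega>"
proof -
  have "diff_quot (Suc j) \<omega> \<le> diff_quot (Suc N) \<omega>" and "diff_quot 0 \<omega> \<le> diff_quot (j - 1) \<omega>"
    using assms by (intro diff_quot_mono; simp)+
  then show ?thesis
    unfolding gap_def spread_def by simp
qed

lemma slope_between_diff_quots:
  assumes \<omega>: "\<omega> \<in> space M" and j: "j \<in> {1..N}" and \<beta>: "node j \<le> \<beta>" "\<beta> \<le> node (Suc j)"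
  shows "diff_quot (j - 1) \<omega> \<le> a \<beta> \<omega> \<and> a \<beta> \<omega> \<le> diff_quot (Suc j) \<omega>"
proof
  have "j - 1 \<le> N + 1" and "Suc (j - 1) = j"
    using j by auto
  then have "diff_quot (j - 1) \<omega> \<le> a (node j) \<omega>"
    using diff_quot_between_slopes[OF \<omega>, of "j - 1"] by simp
  also have "\<dots> \<le> a \<beta> \<omega>"
    using j \<beta> node_pos[of j] node_le_T[of "Suc j"] by (intro slope_mono[OF \<omega>]) auto
  finally show "diff_quot (j - 1) \<omega> \<le> a \<beta> \<omega>" .
  have "a \<beta> \<omega> \<le> a (node (Suc j)) \<omega>"
    using j \<beta> node_pos[of j] node_le_T[of "Suc j"] by (intro slope_mono[OF \<omega>]) auto
  also have "\<dots> \<le> diff_quot (Suc j) \<omega>"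
    using diff_quot_between_slopes[OF \<omega>, of "Suc j"] j by simp
  finally show "a \<beta> \<omega> \<le> diff_quot (Suc j) \<omega>" .
qed

text \<open>Since \<open>\<bar>a \<beta> - diff_quot j\<bar> \<le> gap j \<le> spread\<close>, the square of the deviation is controlled by
  \<open>gap j * spread\<close>, whose sum over all cells telescopes.\<close>

lemma square_slope_deviation_le:
  assumes \<omega>: "\<omega> \<in> space M" and j: "j \<in> {1..N}" and \<beta>: "node j \<le> \<beta>" "\<beta> \<le> node (Suc j)"
  shows "(a \<beta> \<omega> - m)\<^sup>2 \<le> 2 * (diff_quot j \<omega> - m)\<^sup>2 + 2 * (gap j \<omega> * spread \<omega>)"
proof -
  have "\<bar>a \<beta> \<omega> - diff_quot j \<omega>\<bar> \<le> gap j \<omega>"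
    using slope_between_diff_quots[OF assms] diff_quot_mono[OF \<omega>, of "j - 1" j] diff_quot_mono[OF \<omega>, of j "Suc j"] j
    unfolding gap_def by auto
  then have "(a \<beta> \<omega> - diff_quot j \<omega>)\<^sup>2 \<le> (gap j \<omega>)\<^sup>2"
    by (metis abs_ge_zero abs_le_square_iff abs_of_nonneg order_trans)
  also have "\<dots> \<le> gap j \<omega> * spread \<omega>"
    unfolding power2_eq_square using gap_le_spread[OF \<omega>] gap_nonneg[OF \<omega>] j
    by (intro mult_left_mono) auto
  finally show ?thesis
    using square_add_le[of "a \<beta> \<omega> - diff_quot j \<omega>" "diff_quot j \<omega> - m"] by simp
qed

lemma variance_slope_le_cell:
  assumes j: "j \<in> {1..N}" and \<beta>: "node j \<le> \<beta>" "\<beta> \<le> node (Suc j)"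
  shows "variance (a \<beta>) \<le> 8 * V / h\<^sup>2 + 2 * expectation (\<lambda>\<omega>. gap j \<omega> * spread \<omega>)"
proof -
  let ?m = "expectation (diff_quot j)"
  have "0 \<le> \<beta>" "\<beta> \<le> T"
    using node_pos[of j] node_le_T[of "Suc j"] \<beta> j by auto
  note sq_a = square_integrable_a[OF this]
  have sq_diff_quot: "integrable M (\<lambda>\<omega>. (diff_quot j \<omega> - ?m)\<^sup>2)"
    using square_integrable_diff_quot[of j] j by (intro square_integrable_diff_const) auto
  have "variance (a \<beta>) \<le> (\<integral>\<omega>. (a \<beta> \<omega> - ?m)\<^sup>2 \<partial>M)"
    using sq_a by (intro variance_le_integral_square_diff) auto
  also have "\<dots> \<le> (\<integral>\<omega>. 2 * (diff_quot j \<omega> - ?m)\<^sup>2 + 2 * (gap j \<omega> * spread \<omega>) \<partial>M)"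
    using sq_a sq_diff_quot integrable_gap_spread[of j] j square_slope_deviation_le[OF _ j \<beta>]
    by (intro integral_mono_AE square_integrable_diff_const AE_I2) auto
  also have "\<dots> = 2 * variance (diff_quot j) + 2 * expectation (\<lambda>\<omega>. gap j \<omega> * spread \<omega>)"
    using sq_diff_quot integrable_gap_spread[of j] j by simp
  also have "\<dots> \<le> 8 * V / h\<^sup>2 + 2 * expectation (\<lambda>\<omega>. gap j \<omega> * spread \<omega>)"
    using variance_diff_quot[of j] j by simp
  finally show ?thesis .
qed

lemma expectation_last_diff_quot_le: "expectation (diff_quot (Suc N)) \<le> C"
proof -
  let ?s = "node (N + 2)"
  have s: "0 \<le> ?s" "?s + 1 \<le> T"
    using node_pos[of "N + 2"] T_large N_mesh by (auto simp: node_def algebra_simps)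
  have "diff_quot (Suc N) \<omega> \<le> P (?s + 1) \<omega> - P ?s \<omega>" if \<omega>: "\<omega> \<in> space M" for \<omega>
  proof -
    have "diff_quot (Suc N) \<omega> \<le> a ?s \<omega>"
      using diff_quot_between_slopes[OF \<omega>, of "Suc N"] by (simp add: numeral_2_eq_2)
    also have "a ?s \<omega> * (?s + 1 - ?s) \<le> P (?s + 1) \<omega> - P ?s \<omega>"
      using s by (intro slope[OF \<omega>]) auto
    finally show ?thesis by simp
  qed
  then have "expectation (diff_quot (Suc N)) \<le> expectation (\<lambda>\<omega>. P (?s + 1) \<omega> - P ?s \<omega>)"
    using integrable_diff_quot[of "Suc N"] integrable_P s
    by (intro integral_mono_AE AE_I2 Bochner_Integration.integrable_diff) auto
  also have "\<dots> = expectation (P (?s + 1)) - expectation (P ?s)"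
    using integrable_P s by simp
  also have "\<dots> \<le> C"
    using expectation_P[of "?s + 1"] expectation_P[of ?s] s by simp
  finally show ?thesis .
qed

lemma expectation_first_diff_quot_ge: "- (2 * C / b1) \<le> expectation (diff_quot 0)"
proof -
  let ?t = "node 0"
  have t: "0 < ?t" "?t \<le> T" "b1 / 2 \<le> ?t"
    using node_pos node_le_T[of 0] mesh_small b1_pos by (simp_all add: node_def)
  have "(P ?t \<omega> - P 0 \<omega>) / ?t \<le> diff_quot 0 \<omega>" if \<omega>: "\<omega> \<in> space M" for \<omega>
  proof -
    have "a ?t \<omega> * (0 - ?t) \<le> P 0 \<omega> - P ?t \<omega>"
      using t by (intro slope[OF \<omega>]) auto
    then have "(P ?t \<omega> - P 0 \<omega>) / ?t \<le> a ?t \<omega>"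
      using t by (simp add: field_simps)
    also have "\<dots> \<le> diff_quot 0 \<omega>"
      using diff_quot_between_slopes[OF \<omega>, of 0] by simp
    finally show ?thesis .
  qed
  then have quot_ge: "expectation (\<lambda>\<omega>. (P ?t \<omega> - P 0 \<omega>) / ?t) \<le> expectation (diff_quot 0)"
    using integrable_diff_quot[of 0] integrable_P t T_nonneg
    by (intro integral_mono_AE AE_I2 integrable_divide Bochner_Integration.integrable_diff) auto
  have "C / ?t \<le> C / (b1 / 2)"
    using t expectation_bound_nonneg[OF T_nonneg] b1_pos by (intro divide_left_mono) auto
  then have "- (2 * C / b1) \<le> - C / ?t"
    by (simp add: mult.commute)
  also have "\<dots> \<le> (expectation (P ?t) - expectation (P 0)) / ?t"
    using expectation_P[of ?t] expectation_P[of 0] t T_nonneg by (intro divide_right_mono) auto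
  also have "\<dots> = expectation (\<lambda>\<omega>. (P ?t \<omega> - P 0 \<omega>) / ?t)"
    using integrable_P t T_nonneg by simp
  finally show ?thesis
    using quot_ge by linarith
qed

lemma expectation_spread: "0 \<le> expectation spread \<and> expectation spread \<le> C + 2 * C / b1"
proof
  show "0 \<le> expectation spread"
    by (intro integral_nonneg_AE AE_I2 spread_nonneg)
  have "expectation spread = expectation (diff_quot (Suc N)) - expectation (diff_quot 0)"
    unfolding spread_def using integrable_diff_quot[of "Suc N"] integrable_diff_quot[of 0] by simp
  then show "expectation spread \<le> C + 2 * C / b1"
    using expectation_last_diff_quot_le expectation_first_diff_quot_ge by simp
qed

lemma sum_gaps_le: "\<omega> \<in> space M \<Longrightarrow> (\<Sum>j\<in>{1..N}. gap j \<omega>) \<le> 2 * spread \<omega>"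
  unfolding gap_def spread_def sum_telescope_double_step[OF N_pos, of "\<lambda>j. diff_quot j \<omega>"]
  using diff_quot_mono[of \<omega> N "Suc N"] diff_quot_mono[of \<omega> 0 1] by simp

lemma sum_expectation_gap_spread_le:
  "(\<Sum>j\<in>{1..N}. expectation (\<lambda>\<omega>. gap j \<omega> * spread \<omega>)) \<le> 2 * (16 * V / h\<^sup>2 + (C + 2 * C / b1)\<^sup>2)"
proof -
  have "(\<Sum>j\<in>{1..N}. expectation (\<lambda>\<omega>. gap j \<omega> * spread \<omega>))
      = expectation (\<lambda>\<omega>. (\<Sum>j\<in>{1..N}. gap j \<omega>) * spread \<omega>)"
    using integrable_gap_spread
    by (subst Bochner_Integration.integral_sum[symmetric]) (auto simp: sum_distrib_right)
  also have "\<dots> \<le> expectation (\<lambda>\<omega>. 2 * (spread \<omega>)\<^sup>2)"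
  proof (rule integral_mono_AE)
    show "integrable M (\<lambda>\<omega>. (\<Sum>j\<in>{1..N}. gap j \<omega>) * spread \<omega>)"
      using integrable_gap_spread by (auto simp: sum_distrib_right)
    show "AE \<omega> in M. (\<Sum>j\<in>{1..N}. gap j \<omega>) * spread \<omega> \<le> 2 * (spread \<omega>)\<^sup>2"
    proof (rule AE_I2)
      fix \<omega> assume "\<omega> \<in> space M"
      then have "(\<Sum>j\<in>{1..N}. gap j \<omega>) * spread \<omega> \<le> (2 * spread \<omega>) * spread \<omega>"
        using sum_gaps_le spread_nonneg by (intro mult_right_mono)
      then show "(\<Sum>j\<in>{1..N}. gap j \<omega>) * spread \<omega> \<le> 2 * (spread \<omega>)\<^sup>2"
        by (simp add: power2_eq_square)
    qed
  qed (use square_integrable_spread in simp)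
  also have "\<dots> = 2 * (variance spread + (expectation spread)\<^sup>2)"
    using integral_square_diff_const[OF measurable_spread square_integrable_spread, of 0] by simp
  also have "variance spread \<le> 16 * V / h\<^sup>2"
  proof -
    have "variance spread \<le> 2 * variance (diff_quot (Suc N)) + 2 * variance (diff_quot 0)"
      unfolding spread_def by (intro variance_diff_le square_integrable_diff_quot) auto
    then show ?thesis
      using variance_diff_quot[of "Suc N"] variance_diff_quot[of 0] by simp
  qed
  also have "(expectation spread)\<^sup>2 \<le> (C + 2 * C / b1)\<^sup>2"
    using expectation_spread by (intro power_mono) auto
  finally show ?thesis
    by simp
qed

lemma cell_exists:
  assumes "b1 \<le> \<beta>" "\<beta> \<le> b2"
  shows "\<exists>j\<in>{1..N}. node j \<le> \<beta> \<and> \<beta> \<le> node (Suc j)"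
proof -
  define k where "k = nat \<lfloor>(\<beta> - b1) / h\<rfloor>"
  have "0 \<le> (\<beta> - b1) / h"
    using assms mesh_pos by simp
  then have k: "real k \<le> (\<beta> - b1) / h" "(\<beta> - b1) / h < real k + 1"
    unfolding k_def by linarith+
  show ?thesis
  proof (cases "k < N")
    case True
    then show ?thesis
      using k mesh_pos by (intro bexI[of _ "Suc k"]) (auto simp: node_def field_simps)
  next
    case False
    then have "real N \<le> (\<beta> - b1) / h"
      using k by linarith
    then have "real N * h \<le> \<beta> - b1"
      using mesh_pos by (simp add: pos_le_divide_eq)
    then have "node N \<le> \<beta> \<and> \<beta> \<le> node (Suc N)"
      using N_mesh assms mesh_pos by (simp add: node_def algebra_simps)
    then show ?thesis
      using N_pos by (intro bexI[of _ N]) auto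
  qed
qed

theorem integral_variance_slope:
  "0 \<le> (LBINT \<beta>=b1..b2. variance (a \<beta>))
   \<and> (LBINT \<beta>=b1..b2. variance (a \<beta>)) \<le> 8 * (b2 - b1) * V / h\<^sup>2 + 64 * V / h + 4 * h * (C + 2 * C / b1)\<^sup>2"
proof -
  define c where "c j = 8 * V / h\<^sup>2 + 2 * expectation (\<lambda>\<omega>. gap j \<omega> * spread \<omega>)" for j
  have c_nonneg: "0 \<le> c j" if "j \<le> N" for j
    using variance_bound_nonneg[OF T_nonneg] gap_nonneg spread_nonneg that unfolding c_def
    by (intro add_nonneg_nonneg mult_nonneg_nonneg integral_nonneg_AE AE_I2) auto
  have integral_le: "0 \<le> (LBINT \<beta>=b1..b2. variance (a \<beta>))
      \<and> (LBINT \<beta>=b1..b2. variance (a \<beta>)) \<le> (\<Sum>j\<in>{1..N}. c j * (node (Suc j) - node j))"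
  proof (rule interval_integral_le_step_sum)
    fix \<beta> assume \<beta>: "b1 \<le> \<beta>" "\<beta> \<le> b2"
    then obtain j where j: "j \<in> {1..N}" "node j \<le> \<beta>" "\<beta> \<le> node (Suc j)"
      using cell_exists by blast
    have "variance (a \<beta>) \<le> c j * indicator {node j..node (Suc j)} \<beta>"
      using variance_slope_le_cell[OF j] j by (simp add: c_def)
    also have "\<dots> \<le> (\<Sum>j\<in>{1..N}. c j * indicator {node j..node (Suc j)} \<beta>)"
      using j c_nonneg by (intro member_le_sum) auto
    finally show "0 \<le> variance (a \<beta>) \<and> variance (a \<beta>) \<le> (\<Sum>j\<in>{1..N}. c j * indicator {node j..node (Suc j)} \<beta>)"
      using variance_positive by simp
  qed (use b1_less_b2 c_nonneg node_mono in auto)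
  have "(\<Sum>j\<in>{1..N}. c j * (node (Suc j) - node j))
      = h * (real N * (8 * V / h\<^sup>2) + 2 * (\<Sum>j\<in>{1..N}. expectation (\<lambda>\<omega>. gap j \<omega> * spread \<omega>)))"
    by (simp add: c_def node_Suc sum.distrib sum_distrib_left algebra_simps)
  also have "\<dots> \<le> h * (real N * (8 * V / h\<^sup>2) + 4 * (16 * V / h\<^sup>2 + (C + 2 * C / b1)\<^sup>2))"
    using sum_expectation_gap_spread_le mesh_pos by (intro mult_left_mono) auto
  also have "\<dots> = 8 * (b2 - b1) * V / h\<^sup>2 + 64 * V / h + 4 * h * (C + 2 * C / b1)\<^sup>2"
    using mesh_pos N_mesh[symmetric] by (simp add: field_simps power2_eq_square)
  finally show ?thesis
    using integral_le by linarith
qed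

end

section \<open>Gibbs averages on a finite set\<close>

lemma sum_exp_pos: "finite S \<Longrightarrow> S \<noteq> {} \<Longrightarrow> 0 < (\<Sum>\<sigma>\<in>S. exp (p \<sigma> :: real))"
  by (intro sum_pos) auto

lemma ln_sum_exp_ge:
  fixes p :: "'s \<Rightarrow> real"
  assumes "finite S" and "\<sigma>0 \<in> S"
  shows "p \<sigma>0 \<le> ln (\<Sum>\<sigma>\<in>S. exp (p \<sigma>))"
proof -
  have "0 < (\<Sum>\<sigma>\<in>S. exp (p \<sigma>))"
    using assms by (intro sum_exp_pos) auto
  then show ?thesis
    using member_le_sum[of \<sigma>0 S "\<lambda>\<sigma>. exp (p \<sigma>)"] assms by (simp add: ln_ge_iff)
qed

lemma ln_sum_exp_lipschitz:
  fixes p q :: "'s \<Rightarrow> real"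
  assumes fin: "finite S" and ne: "S \<noteq> {}" and d: "\<And>\<sigma>. \<sigma> \<in> S \<Longrightarrow> \<bar>p \<sigma> - q \<sigma>\<bar> \<le> \<delta>"
  shows "\<bar>ln (\<Sum>\<sigma>\<in>S. exp (p \<sigma>)) - ln (\<Sum>\<sigma>\<in>S. exp (q \<sigma>))\<bar> \<le> \<delta>"
proof -
  have shift: "ln (\<Sum>\<sigma>\<in>S. exp (f \<sigma>)) \<le> \<delta> + ln (\<Sum>\<sigma>\<in>S. exp (g \<sigma>))"
    if "\<And>\<sigma>. \<sigma> \<in> S \<Longrightarrow> f \<sigma> \<le> g \<sigma> + \<delta>" for f g :: "'s \<Rightarrow> real"
  proof -
    have "(\<Sum>\<sigma>\<in>S. exp (f \<sigma>)) \<le> (\<Sum>\<sigma>\<in>S. exp \<delta> * exp (g \<sigma>))"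
      using that by (intro sum_mono) (simp add: exp_add[symmetric] add.commute)
    also have "\<dots> = exp \<delta> * (\<Sum>\<sigma>\<in>S. exp (g \<sigma>))"
      by (simp add: sum_distrib_left)
    finally have "ln (\<Sum>\<sigma>\<in>S. exp (f \<sigma>)) \<le> ln (exp \<delta> * (\<Sum>\<sigma>\<in>S. exp (g \<sigma>)))"
      using sum_exp_pos[OF fin ne] by (subst ln_le_cancel_iff) auto
    then show ?thesis
      using sum_exp_pos[OF fin ne, of g] by (simp add: ln_mult)
  qed
  show ?thesis
    using shift[of p q] shift[of q p] d by (force simp: abs_le_iff)
qed

lemma abs_ln_sum_exp_le:
  fixes p :: "'s \<Rightarrow> real"
  assumes "finite S" and "S \<noteq> {}" and "\<And>\<sigma>. \<sigma> \<in> S \<Longrightarrow> \<bar>p \<sigma>\<bar> \<le> B"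
  shows "\<bar>ln (\<Sum>\<sigma>\<in>S. exp (p \<sigma>))\<bar> \<le> ln (real (card S)) + B"
proof -
  have "\<bar>ln (\<Sum>\<sigma>\<in>S. exp (p \<sigma>)) - ln (\<Sum>\<sigma>\<in>S. exp 0)\<bar> \<le> B"
    using ln_sum_exp_lipschitz[of S p "\<lambda>_. 0"] assms by simp
  moreover have "0 \<le> ln (real (card S))"
    using assms by (simp add: Suc_leI card_gt_0_iff)
  ultimately show ?thesis
    by simp
qed

lemma abs_gibbs_average_le:
  fixes H :: "'s \<Rightarrow> real"
  assumes "finite S" and "S \<noteq> {}" and bound: "\<And>\<sigma>. \<sigma> \<in> S \<Longrightarrow> \<bar>H \<sigma>\<bar> \<le> B"
  shows "\<bar>(\<Sum>\<sigma>\<in>S. H \<sigma> * exp (- \<beta> * H \<sigma>)) / (\<Sum>\<sigma>\<in>S. exp (- \<beta> * H \<sigma>))\<bar> \<le> B"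
proof -
  have "\<bar>\<Sum>\<sigma>\<in>S. H \<sigma> * exp (- \<beta> * H \<sigma>)\<bar> \<le> (\<Sum>\<sigma>\<in>S. \<bar>H \<sigma>\<bar> * exp (- \<beta> * H \<sigma>))"
    using sum_abs[of "\<lambda>\<sigma>. H \<sigma> * exp (- \<beta> * H \<sigma>)" S] by (simp add: abs_mult)
  also have "\<dots> \<le> B * (\<Sum>\<sigma>\<in>S. exp (- \<beta> * H \<sigma>))"
    unfolding sum_distrib_left using bound by (intro sum_mono) (simp add: mult_right_mono)
  finally show ?thesis
    using sum_exp_pos[OF assms(1,2), of "\<lambda>\<sigma>. - \<beta> * H \<sigma>"] by (simp add: divide_le_eq abs_divide)
qed

text \<open>Jensen's inequality for \<open>exp\<close> with respect to the Gibbs weights at \<open>x\<close>.\<close>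

lemma ln_sum_exp_tangent_le:
  fixes H :: "'s \<Rightarrow> real"
  assumes fin: "finite S" and ne: "S \<noteq> {}"
  shows "- ((\<Sum>\<sigma>\<in>S. H \<sigma> * exp (- x * H \<sigma>)) / (\<Sum>\<sigma>\<in>S. exp (- x * H \<sigma>))) * (y - x)
    \<le> ln (\<Sum>\<sigma>\<in>S. exp (- y * H \<sigma>)) - ln (\<Sum>\<sigma>\<in>S. exp (- x * H \<sigma>))"
proof -
  define Z where "Z = (\<Sum>\<sigma>\<in>S. exp (- x * H \<sigma>))"
  have Z: "0 < Z"
    unfolding Z_def by (rule sum_exp_pos[OF fin ne])
  define w where "w \<sigma> = exp (- x * H \<sigma>) / Z" for \<sigma>
  have "(\<Sum>\<sigma>\<in>S. w \<sigma>) = 1"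
    unfolding w_def using Z by (simp add: sum_divide_distrib[symmetric] Z_def)
  then have "exp (\<Sum>\<sigma>\<in>S. w \<sigma> *\<^sub>R (- (y - x) * H \<sigma>)) \<le> (\<Sum>\<sigma>\<in>S. w \<sigma> * exp (- (y - x) * H \<sigma>))"
    using Z by (intro convex_on_sum[OF fin ne exp_convex]) (auto simp: w_def)
  also have "(\<Sum>\<sigma>\<in>S. w \<sigma> * exp (- (y - x) * H \<sigma>)) = (\<Sum>\<sigma>\<in>S. exp (- y * H \<sigma>)) / Z"
    unfolding w_def sum_divide_distrib
    by (intro sum.cong refl) (simp add: exp_add[symmetric] algebra_simps)
  also have "(\<Sum>\<sigma>\<in>S. w \<sigma> *\<^sub>R (- (y - x) * H \<sigma>))
      = (\<Sum>\<sigma>\<in>S. (- (y - x) / Z) * (H \<sigma> * exp (- x * H \<sigma>)))"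
    unfolding w_def by (intro sum.cong refl) simp
  also have "\<dots> = (- (y - x) / Z) * (\<Sum>\<sigma>\<in>S. H \<sigma> * exp (- x * H \<sigma>))"
    by (rule sum_distrib_left[symmetric])
  also have "\<dots> = - ((\<Sum>\<sigma>\<in>S. H \<sigma> * exp (- x * H \<sigma>)) / Z) * (y - x)"
    using Z by (simp add: field_simps)
  finally have "- ((\<Sum>\<sigma>\<in>S. H \<sigma> * exp (- x * H \<sigma>)) / Z) * (y - x)
      \<le> ln ((\<Sum>\<sigma>\<in>S. exp (- y * H \<sigma>)) / Z)"
    using Z sum_exp_pos[OF fin ne] by (subst ln_ge_iff) auto
  also have "\<dots> = ln (\<Sum>\<sigma>\<in>S. exp (- y * H \<sigma>)) - ln Z"
    using Z sum_exp_pos[OF fin ne, of "\<lambda>\<sigma>. - y * H \<sigma>"] by (simp add: ln_div)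
  finally show ?thesis
    unfolding Z_def .
qed

section \<open>Spin configurations and the pressure\<close>

lemma finite_configs: "finite L \<Longrightarrow> finite (configs L)"
  unfolding configs_def by (intro finite_PiE) auto

lemma configs_nonempty: "configs L \<noteq> {}"
  unfolding configs_def by (simp add: PiE_eq_empty_iff)

lemma card_configs: "finite L \<Longrightarrow> card (configs L) = 2 ^ card L"
  unfolding configs_def by (simp add: card_PiE numeral_2_eq_2)

lemma abs_sigmaX_le:
  assumes "\<sigma> \<in> configs L" and "X \<subseteq> L"
  shows "\<bar>sigmaX \<sigma> X\<bar> \<le> 1"
proof -
  have "(\<Prod>i\<in>X. \<bar>\<sigma> i\<bar>) = 1"
    using assms by (intro prod.neutral) (force simp: configs_def PiE_iff)
  then show ?thesis
    by (simp add: sigmaX_def abs_prod)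
qed

lemma abs_Ham_le:
  assumes "\<sigma> \<in> configs L"
  shows "\<bar>Ham L y \<sigma>\<bar> \<le> (\<Sum>X\<in>Pow L. \<bar>y X\<bar>)"
proof -
  have "\<bar>Ham L y \<sigma>\<bar> \<le> (\<Sum>X\<in>Pow L. \<bar>y X\<bar> * \<bar>sigmaX \<sigma> X\<bar>)"
    unfolding Ham_def abs_minus_cancel
    using sum_abs[of "\<lambda>X. y X * sigmaX \<sigma> X" "Pow L"] by (simp add: abs_mult)
  also have "\<dots> \<le> (\<Sum>X\<in>Pow L. \<bar>y X\<bar>)"
    using abs_sigmaX_le[OF assms] by (intro sum_mono) (simp add: mult_left_le)
  finally show ?thesis .
qed

lemma Ham_fun_upd:
  assumes "finite L" and "X \<in> Pow L"
  shows "Ham L (y(X := t)) \<sigma> = Ham L y \<sigma> - (t - y X) * sigmaX \<sigma> X"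
proof -
  have "(\<Sum>Z\<in>Pow L. (y(X := t)) Z * sigmaX \<sigma> Z)
      = (\<Sum>Z\<in>Pow L. y Z * sigmaX \<sigma> Z + (if Z = X then (t - y X) * sigmaX \<sigma> X else 0))"
    by (intro sum.cong) (auto simp: algebra_simps)
  then show ?thesis
    using assms by (simp add: Ham_def sum.distrib)
qed

lemma Ham_restrict: "Ham L (restrict y (Pow L)) = Ham L y"
  by (auto simp: Ham_def fun_eq_iff intro!: sum.cong)

lemma partition_fn_pos: "finite L \<Longrightarrow> 0 < partition_fn L y \<beta>"
  unfolding partition_fn_def by (rule sum_exp_pos[OF finite_configs configs_nonempty])

definition pressure :: "'i set \<Rightarrow> ('i set \<Rightarrow> real) \<Rightarrow> real \<Rightarrow> real" where
  "pressure L y \<beta> = ln (partition_fn L y \<beta>) / real (card L)"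

lemma pressure_tangent_le:
  assumes "finite L"
  shows "- internal_energy L y x / real (card L) * (z - x) \<le> pressure L y z - pressure L y x"
  using divide_right_mono[OF ln_sum_exp_tangent_le[OF finite_configs[OF assms] configs_nonempty,
        of "Ham L y" x z], of "real (card L)"]
  by (simp add: pressure_def internal_energy_def partition_fn_def diff_divide_distrib)

lemma abs_pressure_le:
  assumes "finite L" and "0 \<le> \<beta>"
  shows "\<bar>pressure L y \<beta>\<bar> \<le> ln 2 + \<beta> * (\<Sum>X\<in>Pow L. \<bar>y X\<bar>) / real (card L)"
proof (cases "card L = 0")
  case True
  then show ?thesis
    using assms by (simp add: pressure_def)
next
  case False
  have "\<bar>ln (partition_fn L y \<beta>)\<bar> \<le> ln (real (card (configs L))) + \<beta> * (\<Sum>X\<in>Pow L. \<bar>y X\<bar>)"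
    unfolding partition_fn_def
  proof (rule abs_ln_sum_exp_le[OF finite_configs[OF assms(1)] configs_nonempty])
    fix \<sigma> assume "\<sigma> \<in> configs L"
    then show "\<bar>- \<beta> * Ham L y \<sigma>\<bar> \<le> \<beta> * (\<Sum>X\<in>Pow L. \<bar>y X\<bar>)"
      using mult_left_mono[OF abs_Ham_le assms(2)] assms(2) by (simp add: abs_mult)
  qed
  also have "ln (real (card (configs L))) = real (card L) * ln 2"
    by (simp add: card_configs[OF assms(1)] ln_realpow)
  finally have "\<bar>ln (partition_fn L y \<beta>)\<bar> / real (card L)
      \<le> (real (card L) * ln 2 + \<beta> * (\<Sum>X\<in>Pow L. \<bar>y X\<bar>)) / real (card L)"
    by (rule divide_right_mono) simp
  then show ?thesis
    using False by (simp add: pressure_def abs_divide add_divide_distrib)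
qed

lemma abs_internal_energy_le:
  assumes "finite L"
  shows "\<bar>internal_energy L y \<beta>\<bar> \<le> (\<Sum>X\<in>Pow L. \<bar>y X\<bar>)"
  unfolding internal_energy_def partition_fn_def
  by (rule abs_gibbs_average_le[OF finite_configs[OF assms] configs_nonempty abs_Ham_le])

lemma coordinatewise_lipschitz_pressure:
  assumes "finite L" and "0 \<le> \<beta>"
  shows "coordinatewise_lipschitz (Pow L) (\<lambda>_. \<beta> / real (card L)) (\<lambda>y. pressure L y \<beta>)"
  unfolding coordinatewise_lipschitz_def
proof (intro ballI allI)
  fix y X t assume X: "X \<in> Pow L"
  have "\<bar>ln (partition_fn L (y(X := t)) \<beta>) - ln (partition_fn L y \<beta>)\<bar> \<le> \<beta> * \<bar>t - y X\<bar>"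
    unfolding partition_fn_def
  proof (rule ln_sum_exp_lipschitz[OF finite_configs[OF assms(1)] configs_nonempty])
    fix \<sigma> assume "\<sigma> \<in> configs L"
    then have "\<bar>(t - y X) * sigmaX \<sigma> X\<bar> \<le> \<bar>t - y X\<bar>"
      using mult_left_le[OF abs_sigmaX_le abs_ge_zero] X by (simp add: abs_mult)
    moreover have "- \<beta> * Ham L (y(X := t)) \<sigma> - - \<beta> * Ham L y \<sigma> = \<beta> * ((t - y X) * sigmaX \<sigma> X)"
      using assms(1) X by (simp add: Ham_fun_upd algebra_simps)
    ultimately show "\<bar>- \<beta> * Ham L (y(X := t)) \<sigma> - - \<beta> * Ham L y \<sigma>\<bar> \<le> \<beta> * \<bar>t - y X\<bar>"
      using mult_left_mono assms(2) by (simp add: abs_mult)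
  qed
  then show "\<bar>pressure L (y(X := t)) \<beta> - pressure L y \<beta>\<bar> \<le> \<beta> / real (card L) * \<bar>t - y X\<bar>"
    by (simp add: pressure_def diff_divide_distrib[symmetric] abs_divide divide_right_mono)
qed

lemma pressure_ge_Ham:
  assumes "finite L" and "\<sigma> \<in> configs L"
  shows "- \<beta> * Ham L y \<sigma> / real (card L) \<le> pressure L y \<beta>"
  unfolding pressure_def partition_fn_def
  using ln_sum_exp_ge[OF finite_configs[OF assms(1)] assms(2)] by (rule divide_right_mono) simp

lemma measurable_pressure_PiM [measurable]:
  "(\<lambda>y. pressure L y \<beta>) \<in> borel_measurable (PiM (Pow L) (\<lambda>_. borel))"
  unfolding pressure_def partition_fn_def Ham_def by measurable

lemma measurable_internal_energy_PiM [measurable]: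
  "(\<lambda>y. internal_energy L y \<beta>) \<in> borel_measurable (PiM (Pow L) (\<lambda>_. borel))"
  unfolding internal_energy_def partition_fn_def Ham_def by measurable

lemma pressure_restrict: "pressure L (restrict y (Pow L)) = pressure L y"
  by (simp add: pressure_def partition_fn_def Ham_restrict fun_eq_iff)

lemma internal_energy_restrict: "internal_energy L (restrict y (Pow L)) = internal_energy L y"
  by (simp add: internal_energy_def partition_fn_def Ham_restrict fun_eq_iff)

section \<open>Gaussian couplings\<close>

lemma normal_density_mult_exp:
  assumes "0 < \<sigma>"
  shows "normal_density 0 \<sigma> x * exp (u * x) = exp (u\<^sup>2 * \<sigma>\<^sup>2 / 2) * normal_density (u * \<sigma>\<^sup>2) \<sigma> x"
proof -
  have "- (x - 0)\<^sup>2 / (2 * \<sigma>\<^sup>2) + u * x = u\<^sup>2 * \<sigma>\<^sup>2 / 2 + - (x - u * \<sigma>\<^sup>2)\<^sup>2 / (2 * \<sigma>\<^sup>2)"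
    using assms by (simp add: field_simps power2_eq_square)
  then show ?thesis
    unfolding normal_density_def by (simp add: exp_add[symmetric] algebra_simps)
qed

locale gaussian_couplings = prob_space M for M :: "'a measure" +
  fixes J :: "'i set \<Rightarrow> 'a \<Rightarrow> real" and \<Delta> :: "'i set \<Rightarrow> real"
  assumes indep_couplings: "indep_vars (\<lambda>_. borel) J {X. finite X}"
    and coupling_scale_nonneg: "\<And>X. finite X \<Longrightarrow> \<Delta> X \<ge> 0"
    and coupling_normal: "\<And>X. finite X \<Longrightarrow> \<Delta> X > 0 \<Longrightarrow> distributed M lborel (J X) (normal_density 0 (\<Delta> X))"
    and coupling_degenerate: "\<And>X. finite X \<Longrightarrow> \<Delta> X = 0 \<Longrightarrow> (AE \<omega> in M. J X \<omega> = 0)"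
begin

lemma measurable_coupling [measurable]: "finite X \<Longrightarrow> J X \<in> borel_measurable M"
  using indep_couplings unfolding indep_vars_def by auto

lemma coupling_transform:
  assumes X: "finite X" and g: "g \<in> borel_measurable borel"
    and g_int: "\<Delta> X > 0 \<Longrightarrow> integrable lborel (\<lambda>x. normal_density 0 (\<Delta> X) x * g x)"
  shows "integrable M (\<lambda>\<omega>. g (J X \<omega>))"
    and "expectation (\<lambda>\<omega>. g (J X \<omega>))
      = (if 0 < \<Delta> X then \<integral>x. normal_density 0 (\<Delta> X) x * g x \<partial>lborel else g 0)"
proof -
  have "integrable M (\<lambda>\<omega>. g (J X \<omega>)) \<and> expectation (\<lambda>\<omega>. g (J X \<omega>))
      = (if 0 < \<Delta> X then \<integral>x. normal_density 0 (\<Delta> X) x * g x \<partial>lborel else g 0)"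
  proof (cases "\<Delta> X = 0")
    case True
    have ae: "AE \<omega> in M. g (J X \<omega>) = g 0"
      using coupling_degenerate[OF X True] by eventually_elim simp
    note g_J = measurable_compose[OF measurable_coupling[OF X] g]
    have "integrable M (\<lambda>\<omega>. g (J X \<omega>))"
      using integrable_cong_AE[OF g_J _ ae] by simp
    moreover have "expectation (\<lambda>\<omega>. g (J X \<omega>)) = g 0"
      using integral_cong_AE[OF g_J _ ae] by (simp add: prob_space)
    ultimately show ?thesis
      using True by simp
  next
    case False
    then have pos: "\<Delta> X > 0"
      using coupling_scale_nonneg[OF X] by simp
    have g': "g \<in> borel_measurable lborel"
      using g by simp
    show ?thesis
      using distributed_integrable[OF coupling_normal[OF X pos] g'] g_int[OF pos]
        distributed_integral[OF coupling_normal[OF X pos] g'] pos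
      by simp
  qed
  then show "integrable M (\<lambda>\<omega>. g (J X \<omega>))"
    and "expectation (\<lambda>\<omega>. g (J X \<omega>))
      = (if 0 < \<Delta> X then \<integral>x. normal_density 0 (\<Delta> X) x * g x \<partial>lborel else g 0)"
    by auto
qed

lemma coupling_moments:
  assumes X: "finite X"
  shows "integrable M (J X)" and "integrable M (\<lambda>\<omega>. (J X \<omega>)\<^sup>2)"
    and "expectation (J X) = 0" and "expectation (\<lambda>\<omega>. (J X \<omega>)\<^sup>2) = (\<Delta> X)\<^sup>2"
proof -
  have "0 < \<Delta> X \<Longrightarrow> integrable lborel (\<lambda>x. normal_density 0 (\<Delta> X) x * x\<^sup>2)"
    using integrable_normal_moment[of "\<Delta> X" 0 2] by simp
  note first = coupling_transform[OF X measurable_ident_sets[OF refl] integrable_normal_moment_nz_1]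
    and second = coupling_transform[OF X _ this]
  show "integrable M (J X)" and "expectation (J X) = 0"
    using first integral_normal_moment_nz_1[of "\<Delta> X" 0] by simp_all
  show "integrable M (\<lambda>\<omega>. (J X \<omega>)\<^sup>2)" and "expectation (\<lambda>\<omega>. (J X \<omega>)\<^sup>2) = (\<Delta> X)\<^sup>2"
    using second integral_normal_moment_even[of "\<Delta> X" 0 1] coupling_scale_nonneg[OF X] by simp_all
qed

lemma coupling_mgf:
  assumes X: "finite X"
  shows "integrable M (\<lambda>\<omega>. exp (u * J X \<omega>))"
    and "expectation (\<lambda>\<omega>. exp (u * J X \<omega>)) = exp (u\<^sup>2 * (\<Delta> X)\<^sup>2 / 2)"
proof -
  have "0 < \<Delta> X \<Longrightarrow> integrable lborel (\<lambda>x. normal_density 0 (\<Delta> X) x * exp (u * x))"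
    using integrable_normal_density[of "\<Delta> X" "u * (\<Delta> X)\<^sup>2"] by (simp add: normal_density_mult_exp)
  note mgf = coupling_transform[OF X _ this]
  show "integrable M (\<lambda>\<omega>. exp (u * J X \<omega>))"
    using mgf by simp
  show "expectation (\<lambda>\<omega>. exp (u * J X \<omega>)) = exp (u\<^sup>2 * (\<Delta> X)\<^sup>2 / 2)"
    using mgf integral_normal_density[of "\<Delta> X" "u * (\<Delta> X)\<^sup>2"] coupling_scale_nonneg[OF X]
    by (simp add: normal_density_mult_exp)
qed

end

locale gaussian_spin_glass = gaussian_couplings M J \<Delta>
  for M :: "'a measure" and J :: "'i set \<Rightarrow> 'a \<Rightarrow> real" and \<Delta> +
  fixes L :: "'i set"
  assumes finite_box: "finite L" and box_nonempty: "L \<noteq> {}"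
begin

abbreviation random_pressure :: "real \<Rightarrow> 'a \<Rightarrow> real" where
  "random_pressure \<beta> \<omega> \<equiv> pressure L (\<lambda>X. J X \<omega>) \<beta>"

abbreviation energy_density :: "real \<Rightarrow> 'a \<Rightarrow> real" where
  "energy_density \<beta> \<omega> \<equiv> internal_energy L (\<lambda>X. J X \<omega>) \<beta> / real (card L)"

lemma finite_Pow_box: "X \<in> Pow L \<Longrightarrow> finite X"
  using finite_box finite_subset by auto

lemma card_box_pos: "0 < real (card L)"
  using finite_box box_nonempty by (simp add: card_gt_0_iff)

lemma measurable_couplings_box:
  "(\<lambda>\<omega>. restrict (\<lambda>X. J X \<omega>) (Pow L)) \<in> measurable M (PiM (Pow L) (\<lambda>_. borel))"
  using finite_Pow_box by (intro measurable_restrict) simp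

lemma measurable_random_pressure [measurable]: "random_pressure \<beta> \<in> borel_measurable M"
  using measurable_comp[OF measurable_couplings_box measurable_pressure_PiM]
  by (simp add: comp_def pressure_restrict)

lemma measurable_energy_density [measurable]: "energy_density \<beta> \<in> borel_measurable M"
  using measurable_comp[OF measurable_couplings_box measurable_internal_energy_PiM]
  by (simp add: comp_def internal_energy_restrict)

lemma square_integrable_sum_abs_couplings: "integrable M (\<lambda>\<omega>. (\<Sum>X\<in>Pow L. \<bar>J X \<omega>\<bar>)\<^sup>2)"
  using finite_box coupling_moments(2)[OF finite_Pow_box] finite_Pow_box
  by (intro square_integrable_sum) auto

lemma square_integrable_random_pressure:
  assumes "0 \<le> \<beta>"
  shows "integrable M (\<lambda>\<omega>. (random_pressure \<beta> \<omega>)\<^sup>2)"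
proof (rule Bochner_Integration.integrable_bound)
  show "integrable M (\<lambda>\<omega>. (ln 2 + \<beta> / real (card L) * (\<Sum>X\<in>Pow L. \<bar>J X \<omega>\<bar>))\<^sup>2)"
    using square_integrable_mult_left[OF square_integrable_sum_abs_couplings, of "\<beta> / real (card L)"]
    by (intro square_integrable_add) (auto simp: finite_Pow_box)
  show "AE \<omega> in M. norm ((random_pressure \<beta> \<omega>)\<^sup>2)
      \<le> norm ((ln 2 + \<beta> / real (card L) * (\<Sum>X\<in>Pow L. \<bar>J X \<omega>\<bar>))\<^sup>2)"
  proof (rule AE_I2)
    fix \<omega>
    have "\<bar>random_pressure \<beta> \<omega>\<bar> \<le> ln 2 + \<beta> / real (card L) * (\<Sum>X\<in>Pow L. \<bar>J X \<omega>\<bar>)"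
      using abs_pressure_le[OF finite_box assms, of "\<lambda>X. J X \<omega>"] by simp
    then show "norm ((random_pressure \<beta> \<omega>)\<^sup>2)
        \<le> norm ((ln 2 + \<beta> / real (card L) * (\<Sum>X\<in>Pow L. \<bar>J X \<omega>\<bar>))\<^sup>2)"
      by (simp add: abs_le_square_iff[symmetric])
  qed
qed simp

lemma square_integrable_energy_density: "integrable M (\<lambda>\<omega>. (energy_density \<beta> \<omega>)\<^sup>2)"
proof (rule Bochner_Integration.integrable_bound)
  show "integrable M (\<lambda>\<omega>. (1 / real (card L) * (\<Sum>X\<in>Pow L. \<bar>J X \<omega>\<bar>))\<^sup>2)"
    by (rule square_integrable_mult_left[OF square_integrable_sum_abs_couplings])
  show "AE \<omega> in M. norm ((energy_density \<beta> \<omega>)\<^sup>2)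
      \<le> norm ((1 / real (card L) * (\<Sum>X\<in>Pow L. \<bar>J X \<omega>\<bar>))\<^sup>2)"
    using abs_internal_energy_le[OF finite_box] card_box_pos
    by (intro AE_I2) (simp add: abs_le_square_iff[symmetric] abs_divide divide_right_mono)
qed simp

text \<open>Intersecting with \<open>L\<close> only makes every factor a probability measure on the reals; the
  factors outside \<open>Pow L\<close> never matter.\<close>

definition coupling_law :: "'i set \<Rightarrow> real measure" where
  "coupling_law X = distr M borel (J (X \<inter> L))"

lemma real_product_prob_space_coupling_law: "real_product_prob_space coupling_law"
proof (rule real_product_prob_space.intro)
  have [measurable]: "J (X \<inter> L) \<in> borel_measurable M" for X
    using finite_box by simp
  show "prob_space (coupling_law X)" for X
    by (simp add: coupling_law_def prob_space_distr)
  show "sets (coupling_law X) = sets borel" for X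
    by (simp add: coupling_law_def)
  show "integrable (coupling_law X) (\<lambda>t. t\<^sup>2)" for X
    using coupling_moments(2)[of "X \<inter> L"] finite_box by (simp add: coupling_law_def integrable_distr_eq)
qed

lemma variance_coupling_law:
  assumes "X \<in> Pow L"
  shows "prob_space.variance (coupling_law X) (\<lambda>t. t) = (\<Delta> X)\<^sup>2"
proof -
  have [measurable]: "J X \<in> borel_measurable M" and "X \<inter> L = X"
    using assms finite_Pow_box by auto
  then show ?thesis
    using coupling_moments(3,4)[OF finite_Pow_box[OF assms]]
    by (simp add: coupling_law_def integral_distr)
qed

lemma PiM_coupling_law:
  "PiM (Pow L) coupling_law = distr M (PiM (Pow L) (\<lambda>_. borel)) (\<lambda>\<omega>. restrict (\<lambda>X. J X \<omega>) (Pow L))"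
proof -
  have "indep_vars (\<lambda>_. borel) J (Pow L)"
    using finite_Pow_box by (intro indep_vars_subset[OF indep_couplings]) auto
  moreover have "J X \<in> borel_measurable M" if "X \<in> Pow L" for X
    using finite_Pow_box that by simp
  ultimately have "distr M (PiM (Pow L) (\<lambda>_. borel)) (\<lambda>\<omega>. restrict (\<lambda>X. J X \<omega>) (Pow L))
      = PiM (Pow L) (\<lambda>X. distr M borel (J X))"
    using indep_vars_iff_distr_eq_PiM'[where I="Pow L" and X=J and M'="\<lambda>_. borel"] by auto
  also have "\<dots> = PiM (Pow L) coupling_law"
    by (intro PiM_cong) (auto simp: coupling_law_def Int_absorb2)
  finally show ?thesis ..
qed

text \<open>Efron--Stein, the pressure being \<open>\<beta> / card L\<close>-Lipschitz in every coupling.\<close>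

lemma variance_random_pressure:
  assumes "0 \<le> \<beta>"
  shows "variance (random_pressure \<beta>) \<le> (\<beta> / real (card L))\<^sup>2 * (\<Sum>X\<in>Pow L. (\<Delta> X)\<^sup>2)"
proof -
  interpret real_product_prob_space coupling_law
    by (rule real_product_prob_space_coupling_law)
  have sets_eq: "sets (PiM (Pow L) coupling_law) = sets (PiM (Pow L) (\<lambda>_. borel))"
    by (intro sets_PiM_cong) (simp_all add: sets_factor)
  have "(\<lambda>y. pressure L y \<beta>) \<in> borel_measurable (PiM (Pow L) coupling_law)"
    unfolding measurable_cong_sets[OF sets_eq refl] by (rule measurable_pressure_PiM)
  then obtain c where c: "(\<integral>\<^sup>+y. ennreal ((pressure L y \<beta> - c)\<^sup>2) \<partial>PiM (Pow L) coupling_law)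
      \<le> ennreal (\<Sum>X\<in>Pow L. (\<beta> / real (card L))\<^sup>2 * prob_space.variance (coupling_law X) (\<lambda>t. t))"
    using efron_stein_lipschitz[OF _ _ coordinatewise_lipschitz_pressure[OF finite_box assms]] finite_box
    by auto
  have "(\<integral>\<^sup>+y. ennreal ((pressure L y \<beta> - c)\<^sup>2) \<partial>PiM (Pow L) coupling_law)
      = (\<integral>\<^sup>+\<omega>. ennreal ((pressure L (restrict (\<lambda>X. J X \<omega>) (Pow L)) \<beta> - c)\<^sup>2) \<partial>M)"
    unfolding PiM_coupling_law by (intro nn_integral_distr measurable_couplings_box) measurable
  also have "\<dots> = ennreal (\<integral>\<omega>. (random_pressure \<beta> \<omega> - c)\<^sup>2 \<partial>M)"
    unfolding pressure_restrict using square_integrable_random_pressure[OF assms]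
    by (intro nn_integral_eq_integral square_integrable_diff_const) auto
  finally have "(\<integral>\<^sup>+y. ennreal ((pressure L y \<beta> - c)\<^sup>2) \<partial>PiM (Pow L) coupling_law)
      = ennreal (\<integral>\<omega>. (random_pressure \<beta> \<omega> - c)\<^sup>2 \<partial>M)" .
  moreover have "(\<Sum>X\<in>Pow L. (\<beta> / real (card L))\<^sup>2 * prob_space.variance (coupling_law X) (\<lambda>t. t))
      = (\<beta> / real (card L))\<^sup>2 * (\<Sum>X\<in>Pow L. (\<Delta> X)\<^sup>2)"
    by (simp add: variance_coupling_law sum_distrib_left)
  ultimately have "(\<integral>\<omega>. (random_pressure \<beta> \<omega> - c)\<^sup>2 \<partial>M) \<le> (\<beta> / real (card L))\<^sup>2 * (\<Sum>X\<in>Pow L. (\<Delta> X)\<^sup>2)"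
    using c by (simp add: ennreal_le_iff sum_nonneg)
  then show ?thesis
    using variance_le_integral_square_diff[OF _ square_integrable_random_pressure[OF assms], of c]
    by simp
qed

lemma integrable_random_pressure: "0 \<le> \<beta> \<Longrightarrow> integrable M (random_pressure \<beta>)"
  using square_integrable_imp_integrable[OF measurable_random_pressure square_integrable_random_pressure]
  by simp

lemma expectation_Ham:
  "integrable M (\<lambda>\<omega>. Ham L (\<lambda>X. J X \<omega>) \<sigma>)" "expectation (\<lambda>\<omega>. Ham L (\<lambda>X. J X \<omega>) \<sigma>) = 0"
  unfolding Ham_def using finite_box
  by (auto simp: coupling_moments finite_Pow_box)

lemma expectation_random_pressure_nonneg:
  assumes "0 \<le> \<beta>"
  shows "0 \<le> expectation (random_pressure \<beta>)"
proof -
  define \<sigma>0 where "\<sigma>0 = restrict (\<lambda>_. 1::real) L"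
  have \<sigma>0: "\<sigma>0 \<in> configs L"
    by (simp add: \<sigma>0_def configs_def)
  have "0 = expectation (\<lambda>\<omega>. - \<beta> * Ham L (\<lambda>X. J X \<omega>) \<sigma>0 / real (card L))"
    by (simp add: expectation_Ham)
  also have "\<dots> \<le> expectation (random_pressure \<beta>)"
    using expectation_Ham(1) integrable_random_pressure[OF assms] pressure_ge_Ham[OF finite_box \<sigma>0]
    by (intro integral_mono) auto
  finally show ?thesis .
qed

lemma exp_Ham_eq_prod:
  "exp (- \<beta> * Ham L y \<sigma>) = (\<Prod>X\<in>Pow L. exp (\<beta> * sigmaX \<sigma> X * y X))"
  unfolding Ham_def using finite_box
  by (simp add: exp_sum sum_distrib_left sum_negf algebra_simps)

lemma expectation_exp_Ham:
  assumes "\<sigma> \<in> configs L"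
  shows "integrable M (\<lambda>\<omega>. exp (- \<beta> * Ham L (\<lambda>X. J X \<omega>) \<sigma>))"
    and "expectation (\<lambda>\<omega>. exp (- \<beta> * Ham L (\<lambda>X. J X \<omega>) \<sigma>)) \<le> exp (\<beta>\<^sup>2 * (\<Sum>X\<in>Pow L. (\<Delta> X)\<^sup>2) / 2)"
proof -
  define Y where "Y X \<omega> = exp (\<beta> * sigmaX \<sigma> X * J X \<omega>)" for X \<omega>
  have indep: "indep_vars (\<lambda>_. borel) Y (Pow L)"
    unfolding Y_def using finite_Pow_box
    by (intro indep_vars_compose2[OF indep_vars_subset[OF indep_couplings]]) auto
  have int: "integrable M (Y X)" if "X \<in> Pow L" for X
    unfolding Y_def using coupling_mgf(1)[OF finite_Pow_box[OF that]] .
  have "integrable M (\<lambda>\<omega>. \<Prod>X\<in>Pow L. Y X \<omega>)"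
    using finite_box indep int by (intro indep_vars_integrable) auto
  then show "integrable M (\<lambda>\<omega>. exp (- \<beta> * Ham L (\<lambda>X. J X \<omega>) \<sigma>))"
    unfolding exp_Ham_eq_prod Y_def .
  have "expectation (\<lambda>\<omega>. exp (- \<beta> * Ham L (\<lambda>X. J X \<omega>) \<sigma>)) = (\<Prod>X\<in>Pow L. expectation (Y X))"
    unfolding exp_Ham_eq_prod Y_def[symmetric]
    using finite_box indep int by (intro indep_vars_lebesgue_integral) auto
  also have "\<dots> \<le> (\<Prod>X\<in>Pow L. exp (\<beta>\<^sup>2 * (\<Delta> X)\<^sup>2 / 2))"
  proof (intro prod_mono conjI)
    fix X assume X: "X \<in> Pow L"
    show "0 \<le> expectation (Y X)"
      by (simp add: Y_def)
    have "(sigmaX \<sigma> X)\<^sup>2 \<le> 1"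
      using abs_sigmaX_le[OF assms] X by (simp add: abs_square_le_1)
    then have "(\<beta> * sigmaX \<sigma> X)\<^sup>2 * (\<Delta> X)\<^sup>2 \<le> \<beta>\<^sup>2 * (\<Delta> X)\<^sup>2"
      by (simp add: power_mult_distrib mult_left_le mult_right_mono)
    then show "expectation (Y X) \<le> exp (\<beta>\<^sup>2 * (\<Delta> X)\<^sup>2 / 2)"
      unfolding Y_def coupling_mgf(2)[OF finite_Pow_box[OF X], of "\<beta> * sigmaX \<sigma> X"] by simp
  qed
  also have "\<dots> = exp (\<beta>\<^sup>2 * (\<Sum>X\<in>Pow L. (\<Delta> X)\<^sup>2) / 2)"
    using finite_box by (simp add: exp_sum[symmetric] sum_distrib_left sum_divide_distrib)
  finally show "expectation (\<lambda>\<omega>. exp (- \<beta> * Ham L (\<lambda>X. J X \<omega>) \<sigma>)) \<le> exp (\<beta>\<^sup>2 * (\<Sum>X\<in>Pow L. (\<Delta> X)\<^sup>2) / 2)" .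
qed

text \<open>Annealed bound: Jensen's inequality for the concave logarithm, then the Gaussian moment generating
  function of each term of the partition function.\<close>

lemma expectation_random_pressure_le:
  assumes "0 \<le> \<beta>"
  shows "expectation (random_pressure \<beta>) \<le> ln 2 + \<beta>\<^sup>2 * (\<Sum>X\<in>Pow L. (\<Delta> X)\<^sup>2) / (2 * real (card L))"
proof -
  let ?Z = "\<lambda>\<omega>. partition_fn L (\<lambda>X. J X \<omega>) \<beta>"
  let ?E = "\<beta>\<^sup>2 * (\<Sum>X\<in>Pow L. (\<Delta> X)\<^sup>2) / 2"
  have Z_int: "integrable M ?Z"
    unfolding partition_fn_def using expectation_exp_Ham(1) by (intro Bochner_Integration.integrable_sum) blast
  have Z_pos: "0 < ?Z \<omega>" for \<omega>
    by (rule partition_fn_pos[OF finite_box])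
  have "integrable M (\<lambda>\<omega>. - real (card L) * random_pressure \<beta> \<omega>)"
    using integrable_random_pressure[OF assms] by simp
  then have ln_Z_int: "integrable M (\<lambda>\<omega>. - ln (?Z \<omega>))"
    using card_box_pos by (simp add: pressure_def)
  have "- ln (expectation ?Z) \<le> expectation (\<lambda>\<omega>. - ln (?Z \<omega>))"
    using Z_int Z_pos ln_Z_int ln_concave unfolding concave_on_def
    by (intro jensens_inequality[where I="{0<..}"]) auto
  then have "expectation (\<lambda>\<omega>. ln (?Z \<omega>)) \<le> ln (expectation ?Z)"
    by simp
  also have "\<dots> \<le> ln (real (card (configs L)) * exp ?E)"
  proof -
    have "expectation ?Z = (\<Sum>\<sigma>\<in>configs L. expectation (\<lambda>\<omega>. exp (- \<beta> * Ham L (\<lambda>X. J X \<omega>) \<sigma>)))"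
      unfolding partition_fn_def using expectation_exp_Ham(1) by (intro Bochner_Integration.integral_sum) blast
    also have "\<dots> \<le> (\<Sum>\<sigma>\<in>configs L. exp ?E)"
      by (intro sum_mono expectation_exp_Ham(2))
    also have "\<dots> = real (card (configs L)) * exp ?E"
      by simp
    moreover have "0 < expectation ?Z"
      using integral_less_AE_space[of "\<lambda>_. 0" ?Z] Z_int Z_pos by (simp add: emeasure_space_1)
    ultimately show ?thesis
      by simp
  qed
  also have "\<dots> = real (card L) * ln 2 + ?E"
    using finite_box by (simp add: card_configs ln_mult ln_realpow)
  finally have "expectation (\<lambda>\<omega>. ln (?Z \<omega>)) / real (card L) \<le> (real (card L) * ln 2 + ?E) / real (card L)"
    by (rule divide_right_mono) simp
  then show ?thesis
    using card_box_pos by (simp add: pressure_def add_divide_distrib)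
qed

lemma energy_variance_eq_variance: "energy_variance M J L \<beta> = variance (energy_density \<beta>)"
proof -
  have "integrable M (energy_density \<beta>)"
    using square_integrable_imp_integrable[OF measurable_energy_density square_integrable_energy_density] .
  then show ?thesis
    unfolding energy_variance_def Let_def
    by (rule variance_eq[OF _ square_integrable_energy_density, symmetric])
qed

lemma convex_random_function_pressure:
  assumes stable: "(\<Sum>X\<in>Pow L. (\<Delta> X)\<^sup>2) \<le> c * real (card L)" and "0 \<le> c"
  shows "convex_random_function M random_pressure (\<lambda>\<beta> \<omega>. - energy_density \<beta> \<omega>)
    T (T\<^sup>2 * c / real (card L)) (ln 2 + T\<^sup>2 * c / 2)"
proof unfold_locales
  have \<beta>_le_T: "\<beta>\<^sup>2 * c \<le> T\<^sup>2 * c" if "0 \<le> \<beta>" "\<beta> \<le> T" for \<beta>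
    using that \<open>0 \<le> c\<close> by (intro mult_right_mono power_mono) auto
  show "integrable M (\<lambda>\<omega>. (random_pressure \<beta> \<omega>)\<^sup>2)" if "0 \<le> \<beta>" for \<beta>
    using square_integrable_random_pressure[OF that] .
  show "integrable M (\<lambda>\<omega>. (- energy_density \<beta> \<omega>)\<^sup>2)" for \<beta>
    using square_integrable_energy_density by simp
  show "- energy_density x \<omega> * (y - x) \<le> random_pressure y \<omega> - random_pressure x \<omega>" for \<omega> x y
    using pressure_tangent_le[OF finite_box] by simp
  show "variance (random_pressure \<beta>) \<le> T\<^sup>2 * c / real (card L)" if "0 \<le> \<beta>" "\<beta> \<le> T" for \<beta>
  proof -
    have "variance (random_pressure \<beta>) \<le> (\<beta> / real (card L))\<^sup>2 * (c * real (card L))"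
      using variance_random_pressure[OF that(1)] mult_left_mono[OF stable] by (simp add: order_trans)
    also have "\<dots> = \<beta>\<^sup>2 * c / real (card L)"
      using card_box_pos by (simp add: power2_eq_square)
    finally show ?thesis
      using \<beta>_le_T[OF that] card_box_pos by (simp add: divide_right_mono order_trans)
  qed
  show "expectation (random_pressure \<beta>) \<in> {0..ln 2 + T\<^sup>2 * c / 2}" if "0 \<le> \<beta>" "\<beta> \<le> T" for \<beta>
  proof -
    have "expectation (random_pressure \<beta>) \<le> ln 2 + \<beta>\<^sup>2 * (\<Sum>X\<in>Pow L. (\<Delta> X)\<^sup>2) / (2 * real (card L))"
      by (rule expectation_random_pressure_le[OF that(1)])
    also have "\<dots> \<le> ln 2 + \<beta>\<^sup>2 * (c * real (card L)) / (2 * real (card L))"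
      using stable by (intro add_left_mono divide_right_mono mult_left_mono) auto
    also have "\<dots> \<le> ln 2 + T\<^sup>2 * c / 2"
      using \<beta>_le_T[OF that] card_box_pos by simp
    finally show ?thesis
      using expectation_random_pressure_nonneg[OF that(1)] by simp
  qed
qed simp_all

end

context gaussian_couplings
begin

theorem integral_energy_variance_le:
  fixes L :: "'i set" and c \<beta>1 \<beta>2 :: real and k :: nat
  defines "h \<equiv> (\<beta>2 - \<beta>1) / real k" and "C \<equiv> ln 2 + (\<beta>2 + 2)\<^sup>2 * c / 2"
  assumes "finite L" and "L \<noteq> {}" and "(\<Sum>X\<in>Pow L. (\<Delta> X)\<^sup>2) \<le> c * real (card L)" and "0 \<le> c"
    and "0 < \<beta>1" and "\<beta>1 < \<beta>2" and "1 \<le> k" and "h \<le> \<beta>1 / 2" and "h \<le> 1"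
  shows "\<bar>LBINT \<beta>=\<beta>1..\<beta>2. energy_variance M J L \<beta>\<bar>
    \<le> (\<beta>2 + 2)\<^sup>2 * c * (8 * (\<beta>2 - \<beta>1) / h\<^sup>2 + 64 / h) / real (card L) + 4 * h * (C + 2 * C / \<beta>1)\<^sup>2"
proof -
  interpret gaussian_spin_glass M J \<Delta> L
    using assms(3,4) by unfold_locales
  define V where "V = (\<beta>2 + 2)\<^sup>2 * c / real (card L)"
  interpret convex_random_function M random_pressure "\<lambda>\<beta> \<omega>. - energy_density \<beta> \<omega>" "\<beta>2 + 2" V C
    unfolding V_def C_def using assms(5,6) by (rule convex_random_function_pressure)
  interpret convex_random_function_grid M random_pressure "\<lambda>\<beta> \<omega>. - energy_density \<beta> \<omega>"
    "\<beta>2 + 2" V C \<beta>1 \<beta>2 h k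
    by unfold_locales (use assms in auto)
  let ?I = "LBINT \<beta>=\<beta>1..\<beta>2. variance (\<lambda>\<omega>. - energy_density \<beta> \<omega>)"
  have "variance (\<lambda>\<omega>. - energy_density \<beta> \<omega>) = energy_variance M J L \<beta>" for \<beta>
    by (simp add: energy_variance_eq_variance power2_commute)
  then have I_eq: "(LBINT \<beta>=\<beta>1..\<beta>2. energy_variance M J L \<beta>) = ?I"
    by simp
  have V_eq: "8 * (\<beta>2 - \<beta>1) * V / h\<^sup>2 + 64 * V / h
      = (\<beta>2 + 2)\<^sup>2 * c * (8 * (\<beta>2 - \<beta>1) / h\<^sup>2 + 64 / h) / real (card L)"
    unfolding V_def using mesh_pos card_box_pos by (simp add: field_simps)
  have "0 \<le> ?I" and "?I \<le> 8 * (\<beta>2 - \<beta>1) * V / h\<^sup>2 + 64 * V / h + 4 * h * (C + 2 * C / \<beta>1)\<^sup>2"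
    using integral_variance_slope by auto
  then show ?thesis
    unfolding I_eq V_eq[symmetric] by simp
qed

lemma eventually_integral_energy_variance_le:
  fixes L :: "nat \<Rightarrow> 'i set" and c \<beta>1 \<beta>2 :: real
  defines "h \<equiv> \<lambda>k :: nat. (\<beta>2 - \<beta>1) / real k" and "C \<equiv> ln 2 + (\<beta>2 + 2)\<^sup>2 * c / 2"
  assumes finite: "\<And>n. finite (L n)"
    and stable: "\<And>n. L n \<noteq> {} \<Longrightarrow> (\<Sum>X\<in>Pow (L n). (\<Delta> X)\<^sup>2) \<le> c * real (card (L n))"
    and "0 \<le> c" and "0 < \<beta>1" and "\<beta>1 < \<beta>2" and nonempty: "\<forall>\<^sub>F n in sequentially. L n \<noteq> {}"
  shows "\<forall>\<^sub>F k in sequentially. \<forall>\<^sub>F n in sequentially. \<bar>LBINT \<beta>=\<beta>1..\<beta>2. energy_variance M J (L n) \<beta>\<bar>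
    \<le> (\<beta>2 + 2)\<^sup>2 * c * (8 * (\<beta>2 - \<beta>1) / (h k)\<^sup>2 + 64 / h k) / real (card (L n))
      + 4 * h k * (C + 2 * C / \<beta>1)\<^sup>2"
proof -
  have h: "h \<longlonglongrightarrow> 0"
    unfolding h_def by (rule lim_const_over_n)
  have "\<forall>\<^sub>F k in sequentially. 1 \<le> k \<and> h k \<le> \<beta>1 / 2 \<and> h k \<le> 1"
    using eventually_ge_at_top order_tendstoD(2)[OF h half_gt_zero[OF \<open>0 < \<beta>1\<close>]]
      order_tendstoD(2)[OF h zero_less_one]
    by eventually_elim auto
  then show ?thesis
  proof eventually_elim
    case (elim k)
    then have k: "1 \<le> k" "h k \<le> \<beta>1 / 2" "h k \<le> 1"
      by auto
    from nonempty show ?case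
      unfolding h_def C_def
      by eventually_elim (rule integral_energy_variance_le[OF finite _ stable \<open>0 \<le> c\<close> \<open>0 < \<beta>1\<close>
            \<open>\<beta>1 < \<beta>2\<close> k[unfolded h_def]])
  qed
qed

end

section \<open>The thermodynamic limit\<close>

lemma finite_lattice_box: "finite (lattice_box (a :: int ^ 'd) b)"
proof -
  have "lattice_box a b \<subseteq> vec_lambda ` (PiE UNIV (\<lambda>i. {a $ i..b $ i}))"
  proof
    fix x assume "x \<in> lattice_box a b"
    then have "(\<lambda>i. x $ i) \<in> PiE UNIV (\<lambda>i. {a $ i..b $ i})"
      by (auto simp: lattice_box_def)
    then show "x \<in> vec_lambda ` (PiE UNIV (\<lambda>i. {a $ i..b $ i}))"
      by (metis image_eqI vec_lambda_eta)
  qed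
  then show ?thesis
    by (rule finite_subset) (intro finite_imageI finite_PiE; simp)
qed

lemma finite_box: "is_box L \<Longrightarrow> finite L"
  unfolding is_box_def using finite_lattice_box by blast

lemma thermo_stable_sum_le:
  fixes \<Delta> :: "(int ^ 'd) set \<Rightarrow> real"
  assumes "thermo_stable \<Delta>"
  obtains c where "0 \<le> c"
    and "\<And>L. is_box L \<Longrightarrow> L \<noteq> {} \<Longrightarrow> (\<Sum>X\<in>Pow L. (\<Delta> X)\<^sup>2) \<le> c * real (card L)"
proof -
  obtain c where c: "\<And>L. is_box L \<Longrightarrow> (\<Sum>X\<in>Pow L. (\<Delta> X)\<^sup>2) / real (card L) \<le> c"
    using assms unfolding thermo_stable_def by blast
  show ?thesis
  proof
    show "0 \<le> max c 0"
      by simp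
    fix L :: "(int ^ 'd) set"
    assume "is_box L" "L \<noteq> {}"
    then have "0 < real (card L)"
      using finite_box by (simp add: card_gt_0_iff)
    then have "(\<Sum>X\<in>Pow L. (\<Delta> X)\<^sup>2) \<le> c * real (card L)"
      using c[OF \<open>is_box L\<close>] by (simp add: pos_divide_le_eq)
    also have "\<dots> \<le> max c 0 * real (card L)"
      by (intro mult_right_mono) auto
    finally show "(\<Sum>X\<in>Pow L. (\<Delta> X)\<^sup>2) \<le> max c 0 * real (card L)" .
  qed
qed

text \<open>The error term splits into a part that vanishes as \<open>n \<rightarrow> \<infinity>\<close> for every fixed mesh parameter \<open>k\<close>
  and a part that vanishes as \<open>k \<rightarrow> \<infinity>\<close>; choose \<open>k\<close> first, then \<open>n\<close>.\<close>

lemma tendsto_zero_two_scale: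
  fixes I w A g :: "nat \<Rightarrow> real"
  assumes w: "filterlim w at_top sequentially" and g: "g \<longlonglongrightarrow> 0"
    and bound: "\<forall>\<^sub>F k in sequentially. \<forall>\<^sub>F n in sequentially. \<bar>I n\<bar> \<le> A k / w n + g k"
  shows "I \<longlonglongrightarrow> 0"
proof (rule tendstoI)
  fix \<epsilon> :: real assume "0 < \<epsilon>"
  have "\<forall>\<^sub>F k in sequentially. g k < \<epsilon> / 2"
    using g \<open>0 < \<epsilon>\<close> by (intro order_tendstoD(2)) auto
  then have "\<forall>\<^sub>F k in sequentially. g k < \<epsilon> / 2 \<and> (\<forall>\<^sub>F n in sequentially. \<bar>I n\<bar> \<le> A k / w n + g k)"
    using bound by (rule eventually_conj)
  then obtain k where gk: "g k < \<epsilon> / 2" and Ik: "\<forall>\<^sub>F n in sequentially. \<bar>I n\<bar> \<le> A k / w n + g k"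
    using eventually_happens'[OF sequentially_bot] by blast
  have "(\<lambda>n. A k / w n) \<longlonglongrightarrow> 0"
    using w by (intro tendsto_divide_0[OF tendsto_const] filterlim_at_top_imp_at_infinity)
  then have "\<forall>\<^sub>F n in sequentially. A k / w n < \<epsilon> / 2"
    using \<open>0 < \<epsilon>\<close> by (intro order_tendstoD(2)) auto
  with Ik show "\<forall>\<^sub>F n in sequentially. dist (I n) 0 < \<epsilon>"
    by eventually_elim (use gk in \<open>simp only: dist_real_def diff_zero; linarith\<close>)
qed

theorem lemma4:
  fixes M :: "'a measure" and J :: "(int ^ 'd) set \<Rightarrow> 'a \<Rightarrow> real"
    and \<Delta> :: "(int ^ 'd) set \<Rightarrow> real" and \<beta>1 \<beta>2 :: real
    and L :: "nat \<Rightarrow> (int ^ 'd) set"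
  assumes "prob_space M"
    and "prob_space.indep_vars M (\<lambda>_. borel) J {X. finite X}"
    and "\<And>X. finite X \<Longrightarrow> \<Delta> X \<ge> 0"
    and "\<And>X. finite X \<Longrightarrow> \<Delta> X > 0 \<Longrightarrow> distributed M lborel (J X) (normal_density 0 (\<Delta> X))"
    and "\<And>X. finite X \<Longrightarrow> \<Delta> X = 0 \<Longrightarrow> (AE \<omega> in M. J X \<omega> = 0)"
    and "\<And>X a. finite X \<Longrightarrow> \<Delta> ((\<lambda>x. x + a) ` X) = \<Delta> X"
    and "thermo_stable \<Delta>"
    and "0 < \<beta>1" and "\<beta>1 < \<beta>2"
    and "\<And>n. is_box (L n)"
    and "filterlim (\<lambda>n. card (L n)) at_top sequentially"
  shows "(\<lambda>n. LBINT \<beta>=\<beta>1..\<beta>2. energy_variance M J (L n) \<beta>) \<longlonglongrightarrow> 0"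
proof -
  interpret gaussian_couplings M J \<Delta>
    using assms(1-5) by (simp add: gaussian_couplings_def gaussian_couplings_axioms_def)
  obtain c where c: "0 \<le> c" "\<And>L. is_box L \<Longrightarrow> L \<noteq> {} \<Longrightarrow> (\<Sum>X\<in>Pow L. (\<Delta> X)\<^sup>2) \<le> c * real (card L)"
    using thermo_stable_sum_le[OF assms(7)] by blast
  have card: "filterlim (\<lambda>n. real (card (L n))) at_top sequentially"
    by (rule filterlim_compose[OF filterlim_real_sequentially assms(11)])
  then have "\<forall>\<^sub>F n in sequentially. L n \<noteq> {}"
    using filterlim_at_top_dense[THEN iffD1, OF card, rule_format, of 0] by (auto elim: eventually_mono)
  note bound = eventually_integral_energy_variance_le[OF finite_box[OF assms(10)] c(2)[OF assms(10)]
      c(1) assms(8,9) this]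
  have "(\<lambda>k. (\<beta>2 - \<beta>1) / real k) \<longlonglongrightarrow> 0"
    by (rule lim_const_over_n)
  then show ?thesis
    by (intro tendsto_zero_two_scale[OF card _ bound] tendsto_mult_left_zero tendsto_mult_right_zero)
qed

end
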